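(* Let $\rho>0$ and $\mu_{\mathsf f}\in\mathbb R^n$. Consider the minimum variance steering problem: for the system and affine disturbance feedback policy described in the context, find $\overline{\mathscr U}=\{\bar u(0),\dots,\bar u(T-1)\}$ and $\mathscr K=\{K_{(t,\tau)}:0\le\tau\le t\le T-2\}$ minimizing $J_1(\overline{\mathscr U},\mathscr K):=\mathrm{tr}(\mathrm{var}_x(T))$ subject to $\mathbb E\big[\sum_{t=0}^{T-1}u(t)^\top u(t)\big]-\rho^2\le0$ and $\mu_x(T)=\mu_{\mathsf f}$. This problem is equivalent to the convex program $$\min_{(\bar{\bm u},\bm{\mathcal K})\in\mathscr D}\ \mathcal J_1(\bm{\mathcal K})\quad\text{subject to}\quad (\bar{\bm u},\bm{\mathcal K})\in\mathscr D_1\cap\mathscr D_2,$$ where $\mathcal J_1(\bm{\mathcal K}):=\mathrm{tr}\big(\mathbf P_{T+1}\mathfrak h(\bm{\mathcal K})\mathbf P_{T+1}^\top\big)$ with $\mathfrak h(\bm{\mathcal K}):=\mathbf G_0\Sigma_0\mathbf G_0^\top+(\mathbf G_{\bm w}+\mathbf G_{\bm u}\bm{\mathcal K})\mathbf W(\mathbf G_{\bm w}+\mathbf G_{\bm u}\bm{\mathcal K})^\top$, $\mathscr D_1:=\{(\bar{\bm u},\bm{\mathcal K})\in\mathscr D:\ \bar{\bm u}^\top\bar{\bm u}+\mathrm{tr}(\bm{\mathcal K}\mathbf W\bm{\mathcal K}^\top)-\rho^2\le0\}$ and $\mathscr D_2:=\{(\bar{\bm u},\bm{\mathcal K})\in\mathscr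 D:\ \mathbf P_{T+1}(\mathbf G_{\bm u}\bar{\bm u}+\mathbf G_0\mu_0)-\mu_{\mathsf f}=0\}$, the decision variables being related by $\bar{\bm u}=\mathrm{vertcat}(\overline{\mathscr U})$ and $\bm{\mathcal K}$ built from $\mathscr K$ as in the context.
   Context: System: $x(t+1)=A(t)x(t)+B(t)u(t)+w(t)$, $t\in\{0,\dots,T-1\}$, $x(0)=x_0\sim\mathcal N(\mu_0,\Sigma_0)$ with $\Sigma_0$ symmetric positive definite; $w(0),\dots,w(T-1)$ i.i.d. Gaussian with mean $0$ and covariance $W$ (symmetric positive semidefinite), uncorrelated across time, and $\mathbb E[x_0w(t)^\top]=0$. Policy: $u(0)=\bar u(0)$, $u(t)=\bar u(t)+\sum_{\tau=0}^{t-1}K_{(t-1,\tau)}w(\tau)$ for $t\in\{1,\dots,T-1\}$, $K_{(t-1,\tau)}\in\mathbb R^{m\times n}$. Notation: $\Phi(t,\tau):=A(t-1)\cdots A(\tau)$ ($t>\tau$), $\Phi(t,t)=I$. $\bar{\bm u},\bm w$ are vertical concatenations of $\bar u(0..T-1)$, $w(0..T-1)$. $\mathbf W:=\mathrm{bdiag}(W,\dots,W)$ ($T$ blocks). $\mathbf G_0:=[I;\Phi(1,0);\dots;\Phi(T,0)]$; $\mathbf G_{\bm u}$ (block rows $0..T$, block columns $0..T-1$) has $(i,j)$ block $\Phi(i,j+1)B(j)$ if $i\ge j+1$, else $0$; $\mathbf G_{\bm w}$ has $(i,j)$ block $\Phi(i,j+1)$ if $i\ge j+1$, else $0$. $\bm{\mathcal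 K}:=\begin{bmatrix}0&0\\ \mathbf K&0\end{bmatrix}\in\mathbb R^{Tm\times Tn}$ with $\mathbf K$ block lower triangular having $(i,j)$ block $K_{(i,j)}$, $0\le j\le i\le T-2$; then $\bm u=\bar{\bm u}+\bm{\mathcal K}\bm w$. $\mathscr D$ is the set of all pairs $(\bar{\bm u},\bm{\mathcal K})\in\mathbb R^{Tm}\times\mathbb R^{Tm\times Tn}$ with $\bm{\mathcal K}$ of this structure. $\mathbf P_{T+1}\in\mathbb R^{n\times(T+1)n}$ is zero except for an identity in its last block, so $x(T)=\mathbf P_{T+1}[x(0);\dots;x(T)]$. $\mu_x(T)=\mathbb E[x(T)]$, $\mathrm{var}_x(T)$ its covariance matrix. *)

theory Defs
  imports "HOL-Probability.Probability" "Jordan_Normal_Form.Matrix"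
begin

(* Block indexing: row i of a matrix with row blocks of
   size n belongs to block (i div n), position (i mod n). *)

definition mat_trace :: "real mat \<Rightarrow> real" where
  "mat_trace S = (\<Sum>i<dim_row S. index_mat S (i, i))"

fun PhiK :: "(nat \<Rightarrow> real mat) \<Rightarrow> nat \<Rightarrow> nat \<Rightarrow> nat \<Rightarrow> real mat" where
  "PhiK A n tau 0 = 1\<^sub>m n"
| "PhiK A n tau (Suc k) = A (tau + k) * PhiK A n tau k"

(* Phi(t,tau) = A(t-1)...A(tau) for t > tau, Phi(t,t) = I *)
definition Phi :: "(nat \<Rightarrow> real mat) \<Rightarrow> nat \<Rightarrow> nat \<Rightarrow> nat \<Rightarrow> real mat" where
  "Phi A n t tau = PhiK A n tau (t - tau)"

(* G_0 = [I; Phi(1,0); ...; Phi(T,0)] *)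
definition G0 :: "(nat \<Rightarrow> real mat) \<Rightarrow> nat \<Rightarrow> nat \<Rightarrow> real mat" where
  "G0 A n T = mat ((T+1)*n) n (\<lambda>(i,j). index_mat (Phi A n (i div n) 0) (i mod n, j))"

(* G_u: block (i,j) = Phi(i,j+1) B(j) if i >= j+1, else 0 *)
definition Gu :: "(nat \<Rightarrow> real mat) \<Rightarrow> (nat \<Rightarrow> real mat) \<Rightarrow> nat \<Rightarrow> nat \<Rightarrow> nat \<Rightarrow> real mat" where
  "Gu A B n m T = mat ((T+1)*n) (T*m) (\<lambda>(i,j).
      if j div m + 1 \<le> i div n
      then index_mat (Phi A n (i div n) (j div m + 1) * B (j div m)) (i mod n, j mod m)
      else 0)"

(* G_w: block (i,j) = Phi(i,j+1) if i >= j+1, else 0 *)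
definition Gw :: "(nat \<Rightarrow> real mat) \<Rightarrow> nat \<Rightarrow> nat \<Rightarrow> real mat" where
  "Gw A n T = mat ((T+1)*n) (T*n) (\<lambda>(i,j).
      if j div n + 1 \<le> i div n
      then index_mat (Phi A n (i div n) (j div n + 1)) (i mod n, j mod n)
      else 0)"

(* bold W = bdiag(W,...,W), T blocks *)
definition Wbold :: "real mat \<Rightarrow> nat \<Rightarrow> nat \<Rightarrow> real mat" where
  "Wbold W n T = mat (T*n) (T*n) (\<lambda>(i,j).
      if i div n = j div n then index_mat W (i mod n, j mod n) else 0)"

(* P_{T+1}: n x (T+1)n, zero except an identity in the last block *)
definition Pmat :: "nat \<Rightarrow> nat \<Rightarrow> real mat" where
  "Pmat n T = mat n ((T+1)*n) (\<lambda>(i,j). if j div n = T \<and> j mod n = i then 1 else 0)"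

definition stack_u :: "(nat \<Rightarrow> real vec) \<Rightarrow> nat \<Rightarrow> nat \<Rightarrow> real vec" where
  "stack_u Ubar m T = vec (T*m) (\<lambda>i. vec_index (Ubar (i div m)) (i mod m))"

(* calK = [0 0; Kbold 0], Kbold block lower triangular with (i,j) block K_(i,j),
   0 <= j <= i <= T-2; so block (a,b) of calK is K_(a-1,b) if b < a, else 0 *)
definition stack_K :: "(nat \<Rightarrow> nat \<Rightarrow> real mat) \<Rightarrow> nat \<Rightarrow> nat \<Rightarrow> nat \<Rightarrow> real mat" where
  "stack_K K n m T = mat (T*m) (T*n) (\<lambda>(i,j).
      if j div n < i div m then index_mat (K (i div m - 1) (j div n)) (i mod m, j mod n) else 0)"

definition valid_params :: "nat \<Rightarrow> nat \<Rightarrow> nat \<Rightarrow> (nat \<Rightarrow> real vec) \<Rightarrow> (nat \<Rightarrow> nat \<Rightarrow> real mat) \<Rightarrow> bool" where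
  "valid_params n m T Ubar K \<longleftrightarrow>
     (\<forall>t<T. Ubar t \<in> carrier_vec m) \<and>
     (\<forall>t tau. tau \<le> t \<and> t + 2 \<le> T \<longrightarrow> K t tau \<in> carrier_mat m n)"

definition Dset :: "nat \<Rightarrow> nat \<Rightarrow> nat \<Rightarrow> (real vec \<times> real mat) set" where
  "Dset n m T = {(ub, cK). ub \<in> carrier_vec (T*m) \<and> cK \<in> carrier_mat (T*m) (T*n) \<and>
      (\<forall>i<T*m. \<forall>j<T*n. \<not> (j div n < i div m) \<longrightarrow> index_mat cK (i,j) = 0)}"

definition hfun :: "(nat \<Rightarrow> real mat) \<Rightarrow> (nat \<Rightarrow> real mat) \<Rightarrow> real mat \<Rightarrow> real mat
    \<Rightarrow> nat \<Rightarrow> nat \<Rightarrow> nat \<Rightarrow> real mat \<Rightarrow> real mat" where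
  "hfun A B Sigma0 W n m T cK =
     G0 A n T * Sigma0 * transpose_mat (G0 A n T) +
     (Gw A n T + Gu A B n m T * cK) * Wbold W n T * transpose_mat (Gw A n T + Gu A B n m T * cK)"

definition calJ1 :: "(nat \<Rightarrow> real mat) \<Rightarrow> (nat \<Rightarrow> real mat) \<Rightarrow> real mat \<Rightarrow> real mat
    \<Rightarrow> nat \<Rightarrow> nat \<Rightarrow> nat \<Rightarrow> real mat \<Rightarrow> real" where
  "calJ1 A B Sigma0 W n m T cK =
     mat_trace (Pmat n T * hfun A B Sigma0 W n m T cK * transpose_mat (Pmat n T))"

definition D1set :: "real mat \<Rightarrow> real \<Rightarrow> nat \<Rightarrow> nat \<Rightarrow> nat \<Rightarrow> (real vec \<times> real mat) set" where
  "D1set W rho n m T = {(ub, cK) \<in> Dset n m T.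
      scalar_prod ub ub + mat_trace (cK * Wbold W n T * transpose_mat cK) - rho^2 \<le> 0}"

definition D2set :: "(nat \<Rightarrow> real mat) \<Rightarrow> (nat \<Rightarrow> real mat) \<Rightarrow> real vec \<Rightarrow> real vec
    \<Rightarrow> nat \<Rightarrow> nat \<Rightarrow> nat \<Rightarrow> (real vec \<times> real mat) set" where
  "D2set A B mu0 muf n m T = {(ub, cK) \<in> Dset n m T.
      Pmat n T *\<^sub>v (Gu A B n m T *\<^sub>v ub + G0 A n T *\<^sub>v mu0) - muf = 0\<^sub>v n}"

definition convex_pairs :: "(real vec \<times> real mat) set \<Rightarrow> bool" where
  "convex_pairs S \<longleftrightarrow> (\<forall>p\<in>S. \<forall>q\<in>S. \<forall>th::real. 0 \<le> th \<and> th \<le> 1 \<longrightarrow>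
      (th \<cdot>\<^sub>v fst p + (1 - th) \<cdot>\<^sub>v fst q, th \<cdot>\<^sub>m snd p + (1 - th) \<cdot>\<^sub>m snd q) \<in> S)"

definition convex_obj :: "(real vec \<times> real mat) set \<Rightarrow> (real mat \<Rightarrow> real) \<Rightarrow> bool" where
  "convex_obj S f \<longleftrightarrow> (\<forall>p\<in>S. \<forall>q\<in>S. \<forall>th::real. 0 \<le> th \<and> th \<le> 1 \<longrightarrow>
      f (th \<cdot>\<^sub>m snd p + (1 - th) \<cdot>\<^sub>m snd q) \<le> th * f (snd p) + (1 - th) * f (snd q))"

definition ctrl :: "nat \<Rightarrow> (nat \<Rightarrow> real vec) \<Rightarrow> (nat \<Rightarrow> nat \<Rightarrow> real mat)
    \<Rightarrow> (nat \<Rightarrow> 'a \<Rightarrow> real vec) \<Rightarrow> nat \<Rightarrow> 'a \<Rightarrow> real vec" where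
  "ctrl m Ubar K w t \<omega> = vec m (\<lambda>i. vec_index (Ubar t) i +
       (\<Sum>tau<t. vec_index (K (t - 1) tau *\<^sub>v w tau \<omega>) i))"

fun traj :: "(nat \<Rightarrow> real mat) \<Rightarrow> (nat \<Rightarrow> real mat) \<Rightarrow> nat \<Rightarrow> (nat \<Rightarrow> real vec)
    \<Rightarrow> (nat \<Rightarrow> nat \<Rightarrow> real mat) \<Rightarrow> ('a \<Rightarrow> real vec) \<Rightarrow> (nat \<Rightarrow> 'a \<Rightarrow> real vec)
    \<Rightarrow> nat \<Rightarrow> 'a \<Rightarrow> real vec" where
  "traj A B m Ubar K x0 w 0 \<omega> = x0 \<omega>"
| "traj A B m Ubar K x0 w (Suc t) \<omega> =
     A t *\<^sub>v traj A B m Ubar K x0 w t \<omega> + B t *\<^sub>v ctrl m Ubar K w t \<omega> + w t \<omega>"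

definition mean_vec :: "'a measure \<Rightarrow> nat \<Rightarrow> ('a \<Rightarrow> real vec) \<Rightarrow> real vec" where
  "mean_vec M n X = vec n (\<lambda>i. \<integral>\<omega>. vec_index (X \<omega>) i \<partial>M)"

definition cov_mat :: "'a measure \<Rightarrow> nat \<Rightarrow> ('a \<Rightarrow> real vec) \<Rightarrow> real mat" where
  "cov_mat M n X = mat n n (\<lambda>(i,j). \<integral>\<omega>.
      (vec_index (X \<omega>) i - vec_index (mean_vec M n X) i) *
      (vec_index (X \<omega>) j - vec_index (mean_vec M n X) j) \<partial>M)"

definition cross_mat :: "'a measure \<Rightarrow> nat \<Rightarrow> ('a \<Rightarrow> real vec) \<Rightarrow> ('a \<Rightarrow> real vec) \<Rightarrow> real mat" where
  "cross_mat M n X Y = mat n n (\<lambda>(i,j). \<integral>\<omega>. vec_index (X \<omega>) i * vec_index (Y \<omega>) j \<partial>M)"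

definition sym_posdef :: "nat \<Rightarrow> real mat \<Rightarrow> bool" where
  "sym_posdef n S \<longleftrightarrow> S \<in> carrier_mat n n \<and> transpose_mat S = S \<and>
     (\<forall>v \<in> carrier_vec n. v \<noteq> 0\<^sub>v n \<longrightarrow> scalar_prod v (S *\<^sub>v v) > 0)"

definition sym_psd :: "nat \<Rightarrow> real mat \<Rightarrow> bool" where
  "sym_psd n S \<longleftrightarrow> S \<in> carrier_mat n n \<and> transpose_mat S = S \<and>
     (\<forall>v \<in> carrier_vec n. scalar_prod v (S *\<^sub>v v) \<ge> 0)"

end

theory Submission
  imports Defs
begin

(*
  The stacked input is u = ubar + cK w, and by variation of constants the stacked state is
  G0 x0 + Gu u + Gw w.  Hence x(T) = P Gu ubar + (P G0) x0 + P (Gw + Gu cK) w is an affine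
  image of the uncorrelated random vectors x0 and w, and u is an affine image of w alone.
  An affine image d + L1 Z1 + L2 Z2 of uncorrelated square-integrable vectors has mean
  d + L1 mu1 + L2 mu2 and covariance L1 S1 L1^T + L2 S2 L2^T; as w has covariance
  bdiag(W, ..., W), this yields tr var x(T) = J1(cK), E x(T) = P (Gu ubar + G0 mu0) and
  E (sum u(t)^T u(t)) = ubar^T ubar + tr (cK Wbold cK^T), i.e. the two constraint sets.
  Cutting a pair of D into blocks recovers the policy.  Convexity holds because J1 and the
  expected energy are sums of positive semidefinite quadratic forms evaluated at affine
  functions of (ubar, cK), while the terminal-mean constraint is affine.
*)

unbundle no vec_syntax

lemma index_mult_mat_vec_sum:
  "(A :: 'a :: semiring_0 mat) \<in> carrier_mat n N \<Longrightarrow> v \<in> carrier_vec N \<Longrightarrow> i < n \<Longrightarrow>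
   (A *\<^sub>v v) $ i = (\<Sum>k<N. A $$ (i,k) * v $ k)"
  by (auto simp: scalar_prod_def lessThan_atLeast0 intro!: sum.cong)

lemma index_mult_mat_sum:
  "(A :: 'a :: semiring_0 mat) \<in> carrier_mat n N \<Longrightarrow> B \<in> carrier_mat N c \<Longrightarrow> i < n \<Longrightarrow> k < c \<Longrightarrow>
   (A * B) $$ (i,k) = (\<Sum>j<N. A $$ (i,j) * B $$ (j,k))"
  by (auto simp: scalar_prod_def lessThan_atLeast0 intro!: sum.cong)

lemma index_mult_mat_transpose_sum:
  assumes "(L1 :: 'a :: comm_semiring_0 mat) \<in> carrier_mat n1 N1" "S \<in> carrier_mat N1 N2"
    "L2 \<in> carrier_mat n2 N2" "i < n1" "j < n2"
  shows "(L1 * S * transpose_mat L2) $$ (i,j) = (\<Sum>k<N1. \<Sum>l<N2. L1 $$ (i,k) * L2 $$ (j,l) * S $$ (k,l))"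
  using assms
  by (auto simp: scalar_prod_def lessThan_atLeast0 sum_distrib_left sum_distrib_right
      algebra_simps intro!: sum.cong)

lemma index_mult_mat_vec_vec_sum:
  assumes "(A :: 'a :: comm_semiring_0 mat) \<in> carrier_mat r n" "\<And>j. j \<in> J \<Longrightarrow> y j \<in> carrier_vec n" "i < r"
  shows "(A *\<^sub>v vec n (\<lambda>k. \<Sum>j\<in>J. y j $ k)) $ i = (\<Sum>j\<in>J. (A *\<^sub>v y j) $ i)"
  using assms
  by (simp add: index_mult_mat_vec_sum sum_distrib_left sum.swap[of _ J] del: index_mult_mat_vec)

lemma mult_mat_vec_zero: "(A :: 'a :: semiring_0 mat) \<in> carrier_mat n N \<Longrightarrow> A *\<^sub>v 0\<^sub>v N = 0\<^sub>v n"
  by (intro eq_vecI) (auto simp: scalar_prod_def)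

lemma diff_eq_zero_vec_iff:
  "(a :: 'a :: group_add vec) \<in> carrier_vec n \<Longrightarrow> b \<in> carrier_vec n \<Longrightarrow> a - b = 0\<^sub>v n \<longleftrightarrow> a = b"
  by (auto simp: vec_eq_iff)

lemma index_affine_centered:
  fixes L1 L2 :: "'a :: comm_ring mat"
  assumes "L1 \<in> carrier_mat n N1" "L2 \<in> carrier_mat n N2" "d \<in> carrier_vec n"
    "z1 \<in> carrier_vec N1" "mu1 \<in> carrier_vec N1" "z2 \<in> carrier_vec N2" "mu2 \<in> carrier_vec N2" "i < n"
  shows "(d + L1 *\<^sub>v z1 + L2 *\<^sub>v z2) $ i = (d + L1 *\<^sub>v mu1 + L2 *\<^sub>v mu2) $ i
      + (\<Sum>k<N1. L1 $$ (i,k) * (z1 $ k - mu1 $ k)) + (\<Sum>l<N2. L2 $$ (i,l) * (z2 $ l - mu2 $ l))"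
  using assms
  by (simp add: index_mult_mat_vec_sum right_diff_distrib sum_subtractf del: index_mult_mat_vec)

lemma mult_mat_vec_closed_loop:
  fixes P :: "'a :: comm_ring mat"
  assumes P: "P \<in> carrier_mat r N" and Ga: "Ga \<in> carrier_mat N n" and Gb: "Gb \<in> carrier_mat N p"
    and Gc: "Gc \<in> carrier_mat N q" and K: "K \<in> carrier_mat p q" and x: "x \<in> carrier_vec n"
    and u: "u \<in> carrier_vec p" and z: "z \<in> carrier_vec q"
  shows "P *\<^sub>v (Ga *\<^sub>v x + Gb *\<^sub>v (u + K *\<^sub>v z) + Gc *\<^sub>v z)
       = P *\<^sub>v (Gb *\<^sub>v u) + (P * Ga) *\<^sub>v x + (P * (Gc + Gb * K)) *\<^sub>v z"
proof -
  have vecs: "Ga *\<^sub>v x \<in> carrier_vec N" "Gb *\<^sub>v u \<in> carrier_vec N" "Gb *\<^sub>v (K *\<^sub>v z) \<in> carrier_vec N"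
    "Gc *\<^sub>v z \<in> carrier_vec N" "K *\<^sub>v z \<in> carrier_vec p"
    using Ga Gb Gc K x u z by auto
  have split_u: "Gb *\<^sub>v (u + K *\<^sub>v z) = Gb *\<^sub>v u + Gb *\<^sub>v (K *\<^sub>v z)"
    using Gb u vecs by (simp add: mult_add_distrib_mat_vec[OF Gb])
  have feedback: "(P * (Gc + Gb * K)) *\<^sub>v z = P *\<^sub>v (Gc *\<^sub>v z) + P *\<^sub>v (Gb *\<^sub>v (K *\<^sub>v z))"
  proof -
    have "(P * (Gc + Gb * K)) *\<^sub>v z = P *\<^sub>v ((Gc + Gb * K) *\<^sub>v z)"
      using P Gc Gb K z by (intro assoc_mult_mat_vec) auto
    also have "(Gc + Gb * K) *\<^sub>v z = Gc *\<^sub>v z + Gb *\<^sub>v (K *\<^sub>v z)"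
      using Gc Gb K z by (subst add_mult_distrib_mat_vec[of _ N q]) auto
    also have "P *\<^sub>v (Gc *\<^sub>v z + Gb *\<^sub>v (K *\<^sub>v z)) = P *\<^sub>v (Gc *\<^sub>v z) + P *\<^sub>v (Gb *\<^sub>v (K *\<^sub>v z))"
      using P vecs by (intro mult_add_distrib_mat_vec) auto
    finally show ?thesis .
  qed
  have assoc_x: "(P * Ga) *\<^sub>v x = P *\<^sub>v (Ga *\<^sub>v x)" using P Ga x by auto
  have images: "P *\<^sub>v (Ga *\<^sub>v x) \<in> carrier_vec r" "P *\<^sub>v (Gb *\<^sub>v u) \<in> carrier_vec r"
    "P *\<^sub>v (Gb *\<^sub>v (K *\<^sub>v z)) \<in> carrier_vec r" "P *\<^sub>v (Gc *\<^sub>v z) \<in> carrier_vec r"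
    using P vecs by auto
  have distrib_P: "P *\<^sub>v (Ga *\<^sub>v x + (Gb *\<^sub>v u + Gb *\<^sub>v (K *\<^sub>v z)) + Gc *\<^sub>v z)
     = P *\<^sub>v (Ga *\<^sub>v x) + (P *\<^sub>v (Gb *\<^sub>v u) + P *\<^sub>v (Gb *\<^sub>v (K *\<^sub>v z))) + P *\<^sub>v (Gc *\<^sub>v z)"
    using P vecs images by (simp add: mult_add_distrib_mat_vec[OF P]
        assoc_add_vec[OF images(1) add_carrier_vec[OF images(2,3)] images(4)] assoc_add_vec[OF images(2,3,4)])
  show ?thesis unfolding split_u feedback assoc_x distrib_P
    by (rule eq_vecI) (use images in auto)
qed

lemma sandwich_mult:
  fixes P :: "'a :: comm_ring mat"
  assumes "P \<in> carrier_mat r N" "X \<in> carrier_mat N k" "S \<in> carrier_mat k k"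
  shows "P * (X * S * transpose_mat X) * transpose_mat P = (P * X) * S * transpose_mat (P * X)"
proof -
  have c: "X * S \<in> carrier_mat N k" "P * X \<in> carrier_mat r k"
    "transpose_mat X \<in> carrier_mat k N" "transpose_mat P \<in> carrier_mat N r"
    using assms by auto
  have "P * (X * S * transpose_mat X) * transpose_mat P = P * X * S * transpose_mat X * transpose_mat P"
    using assms c by (simp add: assoc_mult_mat[OF assms(1) c(1) c(3)] assoc_mult_mat[OF assms(1,2,3)])
  also have "\<dots> = P * X * S * (transpose_mat X * transpose_mat P)"
    using assoc_mult_mat[OF mult_carrier_mat[OF c(2) assms(3)] c(3) c(4)] by simp
  finally show ?thesis by (simp add: transpose_mult[OF assms(1,2)])
qed

lemma sandwich_add:
  fixes P :: "'a :: comm_ring mat"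
  assumes "P \<in> carrier_mat r N" "X \<in> carrier_mat N N" "Y \<in> carrier_mat N N"
  shows "P * (X + Y) * transpose_mat P = P * X * transpose_mat P + P * Y * transpose_mat P"
  using assms by (simp add: mult_add_distrib_mat[of _ r N] add_mult_distrib_mat[of _ r N])

lemma mat_trace_add:
  "A \<in> carrier_mat n n \<Longrightarrow> B \<in> carrier_mat n n \<Longrightarrow> mat_trace (A + B) = mat_trace A + mat_trace B"
  by (simp add: mat_trace_def sum.distrib)

lemma index_affine_mat_expand:
  fixes P :: "'a :: comm_semiring_0 mat"
  assumes P: "P \<in> carrier_mat r N" and G: "G \<in> carrier_mat N q" and U: "U \<in> carrier_mat N p"
    and K: "K \<in> carrier_mat p q" and i: "i < r" and k: "k < q"
  shows "(P * (G + U * K)) $$ (i,k) = (\<Sum>j<N. P $$ (i,j) * (G $$ (j,k) + (\<Sum>l<p. U $$ (j,l) * K $$ (l,k))))"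
proof -
  have "(P * (G + U * K)) $$ (i,k) = (\<Sum>j<N. P $$ (i,j) * (G + U * K) $$ (j,k))"
    using G U K by (intro index_mult_mat_sum[OF P _ i k]) auto
  also have "\<dots> = (\<Sum>j<N. P $$ (i,j) * (G $$ (j,k) + (\<Sum>l<p. U $$ (j,l) * K $$ (l,k))))"
  proof (intro sum.cong refl)
    fix j assume "j \<in> {..<N}"
    then have j: "j < N" by simp
    have "(G + U * K) $$ (j,k) = G $$ (j,k) + (U * K) $$ (j,k)" using G U K j k by simp
    then show "P $$ (i,j) * (G + U * K) $$ (j,k) = P $$ (i,j) * (G $$ (j,k) + (\<Sum>l<p. U $$ (j,l) * K $$ (l,k)))"
      by (simp only: index_mult_mat_sum[OF U K j k])
  qed
  finally show ?thesis .
qed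

lemma index_affine_mat_convex_comb:
  fixes P :: "real mat"
  assumes P: "P \<in> carrier_mat r N" and G: "G \<in> carrier_mat N q" and U: "U \<in> carrier_mat N p"
    and K1: "K1 \<in> carrier_mat p q" and K2: "K2 \<in> carrier_mat p q" and i: "i < r" and k: "k < q"
  shows "(P * (G + U * (th \<cdot>\<^sub>m K1 + (1 - th) \<cdot>\<^sub>m K2))) $$ (i,k)
     = th * (P * (G + U * K1)) $$ (i,k) + (1 - th) * (P * (G + U * K2)) $$ (i,k)"
  using K1 K2 k
  by (simp add: index_affine_mat_expand[OF P G U _ i k] sum_distrib_left sum.distrib[symmetric]
      algebra_simps)

lemma index_affine_vec_convex_comb:
  fixes P :: "real mat"
  assumes P: "P \<in> carrier_mat r N" and U: "U \<in> carrier_mat N p" and c: "c \<in> carrier_vec N"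
    and u1: "u1 \<in> carrier_vec p" and u2: "u2 \<in> carrier_vec p" and i: "i < r"
  shows "(P *\<^sub>v (U *\<^sub>v (th \<cdot>\<^sub>v u1 + (1 - th) \<cdot>\<^sub>v u2) + c)) $ i
     = th * (P *\<^sub>v (U *\<^sub>v u1 + c)) $ i + (1 - th) * (P *\<^sub>v (U *\<^sub>v u2 + c)) $ i"
proof -
  have E: "(P *\<^sub>v (U *\<^sub>v u + c)) $ i = (\<Sum>j<N. P $$ (i,j) * ((\<Sum>l<p. U $$ (j,l) * u $ l) + c $ j))"
    if "u \<in> carrier_vec p" for u
    using that U c by (simp add: index_mult_mat_vec_sum[OF P _ i] index_mult_mat_vec_sum[OF U that]
        del: index_mult_mat_vec)
  show ?thesis
    using u1 u2
    by (simp add: E sum_distrib_left sum.distrib[symmetric] algebra_simps del: index_mult_mat_vec)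
qed

section \<open>Quadratic forms\<close>

definition quad_form :: "real mat \<Rightarrow> nat \<Rightarrow> (nat \<Rightarrow> real) \<Rightarrow> real" where
  "quad_form S N x = (\<Sum>k<N. \<Sum>l<N. x k * x l * S $$ (k,l))"

lemma quad_form_cong: "(\<And>k. k < N \<Longrightarrow> x k = y k) \<Longrightarrow> quad_form S N x = quad_form S N y"
  unfolding quad_form_def by (auto intro!: sum.cong)

lemma quad_form_convex_comb:
  "quad_form S N (\<lambda>k. th * a k + (1 - th) * b k)
     = th * quad_form S N a + (1 - th) * quad_form S N b - th * (1 - th) * quad_form S N (\<lambda>k. a k - b k)"
proof -
  have "(th * a k + (1 - th) * b k) * (th * a l + (1 - th) * b l) * S $$ (k,l)
     = th * (a k * a l * S $$ (k,l)) + (1 - th) * (b k * b l * S $$ (k,l))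
       - th * (1 - th) * ((a k - b k) * (a l - b l) * S $$ (k,l))" for k l
    by (simp add: algebra_simps)
  then show ?thesis
    unfolding quad_form_def by (simp add: sum.distrib sum_subtractf sum_distrib_left)
qed

lemma quad_form_convex:
  assumes "\<And>x. quad_form S N x \<ge> 0" "0 \<le> th" "th \<le> 1"
  shows "quad_form S N (\<lambda>k. th * a k + (1 - th) * b k) \<le> th * quad_form S N a + (1 - th) * quad_form S N b"
  using assms(1)[of "\<lambda>k. a k - b k"] assms(2,3) unfolding quad_form_convex_comb by simp

lemma quad_form_nonneg:
  assumes "sym_psd N S" shows "quad_form S N x \<ge> 0"
proof -
  have S: "S \<in> carrier_mat N N" and psd: "\<And>v. v \<in> carrier_vec N \<Longrightarrow> scalar_prod v (S *\<^sub>v v) \<ge> 0"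
    using assms unfolding sym_psd_def by auto
  have "scalar_prod (vec N x) (S *\<^sub>v vec N x) = quad_form S N x"
    using S by (simp add: scalar_prod_def atLeast0LessThan quad_form_def sum_distrib_left mult_ac
        index_mult_mat_vec_sum[OF S] del: index_mult_mat_vec)
  then show ?thesis using psd[of "vec N x"] by simp
qed

lemma mat_trace_sandwich:
  assumes L: "(L :: real mat) \<in> carrier_mat r N" and S: "S \<in> carrier_mat N N"
  shows "mat_trace (L * S * transpose_mat L) = (\<Sum>i<r. quad_form S N (\<lambda>k. L $$ (i,k)))"
  unfolding mat_trace_def quad_form_def using L index_mult_mat_transpose_sum[OF L S L]
  by (intro sum.cong) auto

lemma sum_blocks:
  fixes f :: "nat \<Rightarrow> 'b :: comm_monoid_add"
  shows "(\<Sum>q<T*m. f q) = (\<Sum>j<T. \<Sum>c<m. f (j*m + c))"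
proof (induction T)
  case (Suc T)
  have u: "{..<Suc T * m} = {..<T*m} \<union> {T*m..<T*m+m}" by auto
  have "(\<Sum>q<Suc T * m. f q) = (\<Sum>q<T*m. f q) + (\<Sum>q\<in>{T*m..<T*m+m}. f q)"
    unfolding u by (subst sum.union_disjoint) auto
  also have "(\<Sum>q\<in>{T*m..<T*m+m}. f q) = (\<Sum>c<m. f (T*m+c))"
    using sum.shift_bounds_nat_ivl[of f 0 "T*m" m] by (simp add: atLeast0LessThan add.commute)
  finally show ?case using Suc by simp
qed simp

lemma block_index_less [simp]: "j < T \<Longrightarrow> c < (m::nat) \<Longrightarrow> j*m + c < T*m"
proof -
  assume "j < T" "c < m"
  then have "j*m + c < Suc j * m" by simp
  also have "\<dots> \<le> T * m" using \<open>j < T\<close> by (intro mult_le_mono1) simp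
  finally show ?thesis .
qed

lemma div_mod_less_mult: "q < T*n \<Longrightarrow> q div n < (T::nat) \<and> q mod n < n"
  by (metis less_mult_imp_div_less mod_less_divisor mult_0_right neq0_conv not_less0)

lemma sum_lessThan_if_less: "t \<le> (T::nat) \<Longrightarrow> (\<Sum>j<T. if j < t then f j else 0) = (\<Sum>j<t. f j)"
proof -
  assume "t \<le> T"
  then have "{..<T} \<inter> {j. j < t} = {..<t}" by auto
  then show ?thesis using sum.inter_restrict[of "{..<T}" f "{j. j < t}"] by simp
qed

section \<open>Moments of affine images of random vectors\<close>

definition square_integrable :: "'a measure \<Rightarrow> ('a \<Rightarrow> real) \<Rightarrow> bool" where
  "square_integrable M f \<longleftrightarrow> f \<in> borel_measurable M \<and> integrable M (\<lambda>x. (f x)^2)"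

lemma square_integrable_cong:
  "(\<And>x. x \<in> space M \<Longrightarrow> f x = g x) \<Longrightarrow> square_integrable M f \<longleftrightarrow> square_integrable M g"
  unfolding square_integrable_def
  by (metis (no_types, lifting) Bochner_Integration.integrable_cong measurable_cong)

context finite_measure
begin

lemma square_integrable_integrable: "square_integrable M f \<Longrightarrow> integrable M f"
  unfolding square_integrable_def by (auto intro: square_integrable_imp_integrable)

lemma square_integrable_mult_integrable:
  assumes "square_integrable M f" "square_integrable M g"
  shows "integrable M (\<lambda>x. f x * g x)"
proof -
  have "integrable M (\<lambda>x. (f x)^2 + (g x)^2)"
    using assms unfolding square_integrable_def by auto
  then show ?thesis
  proof (rule Bochner_Integration.integrable_bound)
    show "(\<lambda>x. f x * g x) \<in> borel_measurable M"
      using assms unfolding square_integrable_def by auto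
    have "\<bar>f x * g x\<bar> \<le> (f x)^2 + (g x)^2" for x
    proof -
      have "2 * (\<bar>f x\<bar> * \<bar>g x\<bar>) \<le> (f x)^2 + (g x)^2" "0 \<le> \<bar>f x\<bar> * \<bar>g x\<bar>"
        using sum_squares_bound[of "\<bar>f x\<bar>" "\<bar>g x\<bar>"] by (simp_all add: mult.assoc)
      then show ?thesis unfolding abs_mult by linarith
    qed
    then show "AE x in M. norm (f x * g x) \<le> norm ((f x)^2 + (g x)^2)"
      by simp
  qed
qed

lemma square_integrable_const: "square_integrable M (\<lambda>x. c)"
  unfolding square_integrable_def by auto

lemma square_integrable_add:
  assumes "square_integrable M f" "square_integrable M g"
  shows "square_integrable M (\<lambda>x. f x + g x)"
proof -
  have "(\<lambda>x. (f x + g x)^2) = (\<lambda>x. (f x)^2 + 2 * (f x * g x) + (g x)^2)"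
    by (auto simp: power2_eq_square algebra_simps)
  then show ?thesis
    using assms square_integrable_mult_integrable[OF assms]
    unfolding square_integrable_def by auto
qed

lemma square_integrable_cmult:
  "square_integrable M f \<Longrightarrow> square_integrable M (\<lambda>x. c * f x)"
  unfolding square_integrable_def by (simp add: power_mult_distrib borel_measurable_times)

lemma square_integrable_diff:
  "square_integrable M f \<Longrightarrow> square_integrable M g \<Longrightarrow> square_integrable M (\<lambda>x. f x - g x)"
  using square_integrable_add[of f "\<lambda>x. -1 * g x"] square_integrable_cmult[of g "-1"] by simp

lemma square_integrable_sum:
  "(\<And>i. i \<in> I \<Longrightarrow> square_integrable M (f i)) \<Longrightarrow> square_integrable M (\<lambda>x. \<Sum>i\<in>I. f i x)"
  by (induction I rule: infinite_finite_induct)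
    (auto simp: square_integrable_const square_integrable_add)

lemma integral_sum_mult_sum:
  assumes "finite I" "finite J"
    and "\<And>i. i \<in> I \<Longrightarrow> square_integrable M (f i)" "\<And>j. j \<in> J \<Longrightarrow> square_integrable M (g j)"
  shows "(\<integral>x. (\<Sum>i\<in>I. a i * f i x) * (\<Sum>j\<in>J. b j * g j x) \<partial>M)
       = (\<Sum>i\<in>I. \<Sum>j\<in>J. a i * b j * (\<integral>x. f i x * g j x \<partial>M))"
proof -
  have "(\<integral>x. (\<Sum>i\<in>I. a i * f i x) * (\<Sum>j\<in>J. b j * g j x) \<partial>M)
      = (\<integral>x. (\<Sum>i\<in>I. \<Sum>j\<in>J. (a i * b j) * (f i x * g j x)) \<partial>M)"
    by (simp add: sum_product mult_ac)
  also have "\<dots> = (\<Sum>i\<in>I. \<integral>x. (\<Sum>j\<in>J. (a i * b j) * (f i x * g j x)) \<partial>M)"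
    using assms square_integrable_mult_integrable by (intro Bochner_Integration.integral_sum) auto
  also have "\<dots> = (\<Sum>i\<in>I. \<Sum>j\<in>J. \<integral>x. (a i * b j) * (f i x * g j x) \<partial>M)"
    using assms square_integrable_mult_integrable
    by (intro sum.cong refl Bochner_Integration.integral_sum) auto
  finally show ?thesis by simp
qed

lemma integral_lincomb_mult_lincomb:
  assumes L1: "L1 \<in> carrier_mat n1 N1" and L2: "L2 \<in> carrier_mat n2 N2" and ij: "i < n1" "j < n2"
    and f: "\<And>k. k < N1 \<Longrightarrow> square_integrable M (f k)"
    and g: "\<And>l. l < N2 \<Longrightarrow> square_integrable M (g l)"
  shows "(\<integral>x. (\<Sum>k<N1. L1 $$ (i,k) * f k x) * (\<Sum>l<N2. L2 $$ (j,l) * g l x) \<partial>M)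
       = (L1 * mat N1 N2 (\<lambda>(k,l). \<integral>x. f k x * g l x \<partial>M) * transpose_mat L2) $$ (i,j)"
proof -
  have "(\<integral>x. (\<Sum>k<N1. L1 $$ (i,k) * f k x) * (\<Sum>l<N2. L2 $$ (j,l) * g l x) \<partial>M)
      = (\<Sum>k<N1. \<Sum>l<N2. L1 $$ (i,k) * L2 $$ (j,l) * (\<integral>x. f k x * g l x \<partial>M))"
    by (rule integral_sum_mult_sum) (use f g in auto)
  then show ?thesis by (simp add: index_mult_mat_transpose_sum[OF L1 _ L2 ij])
qed

end

context prob_space
begin

lemma integral_centered_square:
  assumes "square_integrable M f"
  shows "(\<integral>x. (f x - (\<integral>x. f x \<partial>M)) * (f x - (\<integral>x. f x \<partial>M)) \<partial>M)
       = (\<integral>x. (f x)^2 \<partial>M) - (\<integral>x. f x \<partial>M)^2"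
proof -
  define a where "a = (\<integral>x. f x \<partial>M)"
  have "(\<integral>x. (f x - a) * (f x - a) \<partial>M) = (\<integral>x. (f x)^2 - 2 * a * f x + a^2 \<partial>M)"
    by (simp add: power2_eq_square algebra_simps)
  also have "\<dots> = (\<integral>x. (f x)^2 \<partial>M) - 2 * a * a + a^2"
    using assms square_integrable_integrable[OF assms] unfolding a_def square_integrable_def
    by (simp add: prob_space)
  finally show ?thesis unfolding a_def by (simp add: power2_eq_square)
qed

lemma centered_component:
  assumes "mean_vec M N Z = mu" "k < N" "square_integrable M (\<lambda>\<omega>. Z \<omega> $ k)"
  shows "square_integrable M (\<lambda>\<omega>. Z \<omega> $ k - mu $ k)" and "(\<integral>\<omega>. Z \<omega> $ k - mu $ k \<partial>M) = 0"
proof -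
  have mu: "mu $ k = (\<integral>\<omega>. Z \<omega> $ k \<partial>M)"
    using assms(1,2) unfolding mean_vec_def by auto
  show "square_integrable M (\<lambda>\<omega>. Z \<omega> $ k - mu $ k)"
    using assms(3) by (intro square_integrable_diff square_integrable_const)
  show "(\<integral>\<omega>. Z \<omega> $ k - mu $ k \<partial>M) = 0"
    using square_integrable_integrable[OF assms(3)] mu by (simp add: prob_space)
qed

lemma integral_lincomb_centered:
  fixes c :: "nat \<Rightarrow> 'a \<Rightarrow> real"
  assumes "\<And>k. k < N \<Longrightarrow> integrable M (c k)" "\<And>k. k < N \<Longrightarrow> (\<integral>\<omega>. c k \<omega> \<partial>M) = 0"
  shows "(\<integral>\<omega>. (\<Sum>k<N. a k * c k \<omega>) \<partial>M) = 0"
  using assms by (subst Bochner_Integration.integral_sum) auto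

lemma mean_affine:
  fixes Z1 Z2 X :: "'a \<Rightarrow> real vec"
  assumes Z1: "\<And>\<omega>. \<omega> \<in> space M \<Longrightarrow> Z1 \<omega> \<in> carrier_vec N1"
    and Z2: "\<And>\<omega>. \<omega> \<in> space M \<Longrightarrow> Z2 \<omega> \<in> carrier_vec N2"
    and Z1_sq: "\<And>k. k < N1 \<Longrightarrow> square_integrable M (\<lambda>\<omega>. Z1 \<omega> $ k)"
    and Z2_sq: "\<And>l. l < N2 \<Longrightarrow> square_integrable M (\<lambda>\<omega>. Z2 \<omega> $ l)"
    and mean1: "mean_vec M N1 Z1 = mu1" and mean2: "mean_vec M N2 Z2 = mu2"
    and L1: "L1 \<in> carrier_mat n N1" and L2: "L2 \<in> carrier_mat n N2" and d: "d \<in> carrier_vec n"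
    and X: "\<And>\<omega>. \<omega> \<in> space M \<Longrightarrow> X \<omega> = d + L1 *\<^sub>v Z1 \<omega> + L2 *\<^sub>v Z2 \<omega>"
  shows "mean_vec M n X = d + L1 *\<^sub>v mu1 + L2 *\<^sub>v mu2"
    and "\<And>i. i < n \<Longrightarrow> square_integrable M (\<lambda>\<omega>. X \<omega> $ i)"
proof -
  have mu: "mu1 \<in> carrier_vec N1" "mu2 \<in> carrier_vec N2"
    using mean1 mean2 unfolding mean_vec_def by auto
  define P where "P i \<omega> = (\<Sum>k<N1. L1 $$ (i,k) * (Z1 \<omega> $ k - mu1 $ k))" for i \<omega>
  define Q where "Q i \<omega> = (\<Sum>l<N2. L2 $$ (i,l) * (Z2 \<omega> $ l - mu2 $ l))" for i \<omega>
  define e where "e = d + L1 *\<^sub>v mu1 + L2 *\<^sub>v mu2"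
  note c1 = centered_component[OF mean1 _ Z1_sq] and c2 = centered_component[OF mean2 _ Z2_sq]
  have PQ_sq: "square_integrable M (P i)" "square_integrable M (Q i)" for i
    unfolding P_def Q_def using c1 c2 by (auto intro!: square_integrable_sum square_integrable_cmult)
  have PQ_int: "(\<integral>\<omega>. P i \<omega> \<partial>M) = 0" "(\<integral>\<omega>. Q i \<omega> \<partial>M) = 0" for i
    unfolding P_def Q_def using c1 c2 square_integrable_integrable by (auto intro!: integral_lincomb_centered)
  have X_eq: "X \<omega> $ i = e $ i + P i \<omega> + Q i \<omega>" if "\<omega> \<in> space M" "i < n" for \<omega> i
    unfolding X[OF that(1)] e_def P_def Q_def
    using index_affine_centered[OF L1 L2 d Z1[OF that(1)] mu(1) Z2[OF that(1)] mu(2) that(2)] .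
  show "square_integrable M (\<lambda>\<omega>. X \<omega> $ i)" if "i < n" for i
    using square_integrable_cong[of M "\<lambda>\<omega>. X \<omega> $ i"] X_eq that PQ_sq
    by (auto intro!: square_integrable_add square_integrable_const)
  have "(\<integral>\<omega>. X \<omega> $ i \<partial>M) = e $ i" if "i < n" for i
  proof -
    have "(\<integral>\<omega>. X \<omega> $ i \<partial>M) = (\<integral>\<omega>. e $ i + P i \<omega> + Q i \<omega> \<partial>M)"
      using X_eq that by (intro Bochner_Integration.integral_cong) auto
    then show ?thesis using PQ_sq PQ_int square_integrable_integrable by (simp add: prob_space)
  qed
  moreover have "e \<in> carrier_vec n"
    unfolding e_def using L1 L2 d mu by auto
  ultimately show "mean_vec M n X = d + L1 *\<^sub>v mu1 + L2 *\<^sub>v mu2"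
    unfolding e_def[symmetric] by (intro eq_vecI) (auto simp: mean_vec_def)
qed

lemma cov_affine_uncorrelated:
  fixes Z1 Z2 X :: "'a \<Rightarrow> real vec"
  assumes Z1: "\<And>\<omega>. \<omega> \<in> space M \<Longrightarrow> Z1 \<omega> \<in> carrier_vec N1"
    and Z2: "\<And>\<omega>. \<omega> \<in> space M \<Longrightarrow> Z2 \<omega> \<in> carrier_vec N2"
    and Z1_sq: "\<And>k. k < N1 \<Longrightarrow> square_integrable M (\<lambda>\<omega>. Z1 \<omega> $ k)"
    and Z2_sq: "\<And>l. l < N2 \<Longrightarrow> square_integrable M (\<lambda>\<omega>. Z2 \<omega> $ l)"
    and mean1: "mean_vec M N1 Z1 = mu1" and mean2: "mean_vec M N2 Z2 = mu2"
    and cov1: "cov_mat M N1 Z1 = S1" and cov2: "cov_mat M N2 Z2 = S2"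
    and uncorr: "\<And>k l. k < N1 \<Longrightarrow> l < N2 \<Longrightarrow>
      (\<integral>\<omega>. (Z1 \<omega> $ k - mu1 $ k) * (Z2 \<omega> $ l - mu2 $ l) \<partial>M) = 0"
    and L1: "L1 \<in> carrier_mat n N1" and L2: "L2 \<in> carrier_mat n N2" and d: "d \<in> carrier_vec n"
    and X: "\<And>\<omega>. \<omega> \<in> space M \<Longrightarrow> X \<omega> = d + L1 *\<^sub>v Z1 \<omega> + L2 *\<^sub>v Z2 \<omega>"
  shows "cov_mat M n X = L1 * S1 * transpose_mat L1 + L2 * S2 * transpose_mat L2"
proof (rule eq_matI)
  have mu: "mu1 \<in> carrier_vec N1" "mu2 \<in> carrier_vec N2"
    using mean1 mean2 unfolding mean_vec_def by auto
  define c1 where "c1 k \<omega> = Z1 \<omega> $ k - mu1 $ k" for k \<omega>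
  define c2 where "c2 l \<omega> = Z2 \<omega> $ l - mu2 $ l" for l \<omega>
  define P where "P i \<omega> = (\<Sum>k<N1. L1 $$ (i,k) * c1 k \<omega>)" for i \<omega>
  define Q where "Q i \<omega> = (\<Sum>l<N2. L2 $$ (i,l) * c2 l \<omega>)" for i \<omega>
  note c1 = centered_component(1)[OF mean1 _ Z1_sq, folded c1_def]
  note c2 = centered_component(1)[OF mean2 _ Z2_sq, folded c2_def]
  have PQ_sq: "square_integrable M (P i)" "square_integrable M (Q i)" for i
    unfolding P_def Q_def using c1 c2 by (auto intro!: square_integrable_sum square_integrable_cmult)
  have mean: "mean_vec M n X = d + L1 *\<^sub>v mu1 + L2 *\<^sub>v mu2"
    by (rule mean_affine(1)[OF Z1 Z2 Z1_sq Z2_sq mean1 mean2 L1 L2 d X])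
  have X_centered: "X \<omega> $ i - mean_vec M n X $ i = P i \<omega> + Q i \<omega>" if "\<omega> \<in> space M" "i < n" for \<omega> i
    unfolding X[OF that(1)] mean P_def Q_def c1_def c2_def
    using index_affine_centered[OF L1 L2 d Z1[OF that(1)] mu(1) Z2[OF that(1)] mu(2) that(2)] by simp
  have S: "mat N1 N1 (\<lambda>(k,l). \<integral>\<omega>. c1 k \<omega> * c1 l \<omega> \<partial>M) = S1"
    "mat N2 N2 (\<lambda>(k,l). \<integral>\<omega>. c2 k \<omega> * c2 l \<omega> \<partial>M) = S2"
    "mat N1 N2 (\<lambda>(k,l). \<integral>\<omega>. c1 k \<omega> * c2 l \<omega> \<partial>M) = 0\<^sub>m N1 N2"
    "mat N2 N1 (\<lambda>(k,l). \<integral>\<omega>. c2 k \<omega> * c1 l \<omega> \<partial>M) = 0\<^sub>m N2 N1"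
    using uncorr by (auto simp: c1_def c2_def mult.commute cov_mat_def simp flip: cov1 cov2 mean1 mean2)
  fix i j assume "i < dim_row (L1 * S1 * transpose_mat L1 + L2 * S2 * transpose_mat L2)"
    "j < dim_col (L1 * S1 * transpose_mat L1 + L2 * S2 * transpose_mat L2)"
  then have ij: "i < n" "j < n" using L1 L2 by auto
  have "cov_mat M n X $$ (i,j) = (\<integral>\<omega>. P i \<omega> * P j \<omega> + P i \<omega> * Q j \<omega> + (Q i \<omega> * P j \<omega> + Q i \<omega> * Q j \<omega>) \<partial>M)"
    unfolding cov_mat_def using ij X_centered
    by (auto simp: algebra_simps intro!: Bochner_Integration.integral_cong)
  also have "\<dots> = (\<integral>\<omega>. P i \<omega> * P j \<omega> \<partial>M) + (\<integral>\<omega>. P i \<omega> * Q j \<omega> \<partial>M)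
     + ((\<integral>\<omega>. Q i \<omega> * P j \<omega> \<partial>M) + (\<integral>\<omega>. Q i \<omega> * Q j \<omega> \<partial>M))"
    using square_integrable_mult_integrable PQ_sq by simp
  also have "\<dots> = (L1 * S1 * transpose_mat L1 + L2 * S2 * transpose_mat L2) $$ (i,j)"
    unfolding P_def Q_def using ij L1 L2 c1 c2
    by (simp add: integral_lincomb_mult_lincomb[OF L1 L1] integral_lincomb_mult_lincomb[OF L1 L2]
        integral_lincomb_mult_lincomb[OF L2 L1] integral_lincomb_mult_lincomb[OF L2 L2] S)
  finally show "cov_mat M n X $$ (i,j) = (L1 * S1 * transpose_mat L1 + L2 * S2 * transpose_mat L2) $$ (i,j)" .
qed (use L1 L2 in \<open>auto simp: cov_mat_def\<close>)

text \<open>The one-vector case is the two-vector case with a void first summand in \<open>\<real>\<^sup>0\<close>.\<close>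

corollary moments_affine:
  fixes Z X :: "'a \<Rightarrow> real vec"
  assumes Z: "\<And>\<omega>. \<omega> \<in> space M \<Longrightarrow> Z \<omega> \<in> carrier_vec N"
    and Z_sq: "\<And>k. k < N \<Longrightarrow> square_integrable M (\<lambda>\<omega>. Z \<omega> $ k)"
    and mean: "mean_vec M N Z = mu" and cov: "cov_mat M N Z = S"
    and L: "L \<in> carrier_mat n N" and d: "d \<in> carrier_vec n"
    and X: "\<And>\<omega>. \<omega> \<in> space M \<Longrightarrow> X \<omega> = d + L *\<^sub>v Z \<omega>"
  shows "mean_vec M n X = d + L *\<^sub>v mu"
    and "cov_mat M n X = L * S * transpose_mat L"
    and "\<And>i. i < n \<Longrightarrow> square_integrable M (\<lambda>\<omega>. X \<omega> $ i)"
proof -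
  have mean0: "mean_vec M 0 (\<lambda>_. 0\<^sub>v 0) = 0\<^sub>v 0" and cov0: "cov_mat M 0 (\<lambda>_. 0\<^sub>v 0) = 0\<^sub>m 0 0"
    by (auto simp: mean_vec_def cov_mat_def)
  have void: "0\<^sub>m n 0 *\<^sub>v 0\<^sub>v 0 = (0\<^sub>v n :: real vec)"
    by (intro eq_vecI) (auto simp: scalar_prod_def)
  have X': "X \<omega> = d + 0\<^sub>m n 0 *\<^sub>v 0\<^sub>v 0 + L *\<^sub>v Z \<omega>" if "\<omega> \<in> space M" for \<omega>
    using X[OF that] d unfolding void by simp
  note mean_X = mean_affine[OF _ Z _ Z_sq mean0 mean zero_carrier_mat L d X']
  have S: "S \<in> carrier_mat N N" using cov unfolding cov_mat_def by auto
  show "mean_vec M n X = d + L *\<^sub>v mu"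
    using mean_X(1) d unfolding void by simp
  show "square_integrable M (\<lambda>\<omega>. X \<omega> $ i)" if "i < n" for i
    using mean_X(2) that by simp
  show "cov_mat M n X = L * S * transpose_mat L"
    using cov_affine_uncorrelated[OF _ Z _ Z_sq mean0 mean cov0 cov _ zero_carrier_mat L d X'] L S by simp
qed

lemma sum_second_moments:
  fixes X :: "'a \<Rightarrow> real vec"
  assumes "\<And>q. q < N \<Longrightarrow> square_integrable M (\<lambda>\<omega>. X \<omega> $ q)"
  shows "(\<Sum>q<N. \<integral>\<omega>. (X \<omega> $ q)^2 \<partial>M) = mat_trace (cov_mat M N X) + scalar_prod (mean_vec M N X) (mean_vec M N X)"
proof -
  have "(\<integral>\<omega>. (X \<omega> $ q)^2 \<partial>M) = cov_mat M N X $$ (q,q) + mean_vec M N X $ q * mean_vec M N X $ q"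
    if "q < N" for q
    using integral_centered_square[OF assms[OF that]] that
    by (simp add: cov_mat_def mean_vec_def power2_eq_square)
  then show ?thesis
    by (simp add: sum.distrib mat_trace_def cov_mat_def scalar_prod_def mean_vec_def lessThan_atLeast0)
qed

end

section \<open>The stacked closed-loop system\<close>

lemma PhiK_carrier:
  "(\<And>k. s \<le> k \<Longrightarrow> k < s + K \<Longrightarrow> A k \<in> carrier_mat n n) \<Longrightarrow> PhiK A n s K \<in> carrier_mat n n"
  by (induction K) (auto intro!: mult_carrier_mat)

lemma Phi_carrier:
  "(\<And>k. s \<le> k \<Longrightarrow> k < t \<Longrightarrow> A k \<in> carrier_mat n n) \<Longrightarrow> Phi A n t s \<in> carrier_mat n n"
  unfolding Phi_def by (rule PhiK_carrier) auto

lemma Phi_Suc: "s \<le> t \<Longrightarrow> Phi A n (Suc t) s = A t * Phi A n t s"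
  unfolding Phi_def by (simp add: Suc_diff_le)

lemma Phi_same [simp]: "Phi A n t t = 1\<^sub>m n"
  unfolding Phi_def by simp

lemma variation_of_constants:
  fixes x v :: "nat \<Rightarrow> real vec"
  assumes A: "\<And>s. s < t \<Longrightarrow> A s \<in> carrier_mat n n" and v: "\<And>s. s < t \<Longrightarrow> v s \<in> carrier_vec n"
    and x0: "x 0 \<in> carrier_vec n" and step: "\<And>s. s < t \<Longrightarrow> x (Suc s) = A s *\<^sub>v x s + v s"
  shows "x t = Phi A n t 0 *\<^sub>v x 0 + vec n (\<lambda>i. \<Sum>s<t. (Phi A n t (Suc s) *\<^sub>v v s) $ i)"
  using assms
proof (induction t)
  case 0
  then show ?case by (intro eq_vecI) auto
next
  case (Suc t)
  let ?S = "\<lambda>t. vec n (\<lambda>i. \<Sum>s<t. (Phi A n t (Suc s) *\<^sub>v v s) $ i)"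
  have At: "A t \<in> carrier_mat n n" and vt: "v t \<in> carrier_vec n" using Suc.prems by auto
  have Phi: "Phi A n t s \<in> carrier_mat n n" for s using Suc.prems by (intro Phi_carrier) auto
  have vs: "v s \<in> carrier_vec n" if "s < t" for s using Suc.prems that by auto
  have "x (Suc t) = A t *\<^sub>v (Phi A n t 0 *\<^sub>v x 0 + ?S t) + v t"
    using Suc by simp
  also have "A t *\<^sub>v (Phi A n t 0 *\<^sub>v x 0 + ?S t) = Phi A n (Suc t) 0 *\<^sub>v x 0 + A t *\<^sub>v ?S t"
    using At Phi x0
    by (subst mult_add_distrib_mat_vec[OF At])
      (auto simp: Phi_Suc assoc_mult_mat_vec[of _ n n _ n] intro: mult_mat_vec_carrier)
  also have "A t *\<^sub>v ?S t = vec n (\<lambda>i. \<Sum>s<t. (Phi A n (Suc t) (Suc s) *\<^sub>v v s) $ i)"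
    using At Phi vs
    by (intro eq_vecI, subst index_mult_mat_vec_vec_sum[OF At])
      (auto simp: Phi_Suc assoc_mult_mat_vec[of _ n n _ n] intro!: mult_mat_vec_carrier)
  also have "Phi A n (Suc t) 0 *\<^sub>v x 0 + \<dots> + v t = Phi A n (Suc t) 0 *\<^sub>v x 0 + ?S (Suc t)"
    using vt by (intro eq_vecI) auto
  finally show ?case .
qed

definition stack_w :: "nat \<Rightarrow> nat \<Rightarrow> (nat \<Rightarrow> 'a \<Rightarrow> real vec) \<Rightarrow> 'a \<Rightarrow> real vec" where
  "stack_w n T w \<omega> = vec (T*n) (\<lambda>q. w (q div n) \<omega> $ (q mod n))"

lemma stacked_carrier [simp]:
  "G0 A n T \<in> carrier_mat ((T+1)*n) n"
  "Gu A B n m T \<in> carrier_mat ((T+1)*n) (T*m)"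
  "Gw A n T \<in> carrier_mat ((T+1)*n) (T*n)"
  "Pmat n T \<in> carrier_mat n ((T+1)*n)"
  "Wbold W n T \<in> carrier_mat (T*n) (T*n)"
  "stack_u Ubar m T \<in> carrier_vec (T*m)"
  "stack_K K n m T \<in> carrier_mat (T*m) (T*n)"
  "stack_w n T w \<omega> \<in> carrier_vec (T*n)"
  by (auto simp: G0_def Gu_def Gw_def Pmat_def Wbold_def stack_u_def stack_K_def stack_w_def)

lemma index_G0_mult_vec:
  assumes A: "\<And>k. k < t \<Longrightarrow> A k \<in> carrier_mat n n" and t: "t \<le> T" and i: "i < n"
    and x: "x \<in> carrier_vec n"
  shows "(G0 A n T *\<^sub>v x) $ (t*n+i) = (Phi A n t 0 *\<^sub>v x) $ i"
proof -
  have P: "Phi A n t 0 \<in> carrier_mat n n" using A by (intro Phi_carrier) auto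
  have r: "t*n+i < (T+1)*n" using t i block_index_less[of t "T+1" i n] by simp
  have "(G0 A n T *\<^sub>v x) $ (t*n+i) = (\<Sum>k<n. G0 A n T $$ (t*n+i,k) * x $ k)"
    by (rule index_mult_mat_vec_sum[OF stacked_carrier(1) x r])
  also have "\<dots> = (\<Sum>k<n. Phi A n t 0 $$ (i,k) * x $ k)"
    using i r by (auto simp: G0_def intro!: sum.cong)
  also have "\<dots> = (Phi A n t 0 *\<^sub>v x) $ i"
    by (rule index_mult_mat_vec_sum[OF P x i, symmetric])
  finally show ?thesis .
qed

lemma index_Gu_mult_vec:
  assumes AB: "\<And>k. k < T \<Longrightarrow> A k \<in> carrier_mat n n \<and> B k \<in> carrier_mat n m"
    and t: "t \<le> T" and i: "i < n" and u: "u \<in> carrier_vec (T*m)"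
  shows "(Gu A B n m T *\<^sub>v u) $ (t*n+i)
    = (\<Sum>j<t. (Phi A n t (Suc j) *\<^sub>v (B j *\<^sub>v vec m (\<lambda>c. u $ (j*m+c)))) $ i)"
proof -
  have r: "t*n+i < (T+1)*n" using t i block_index_less[of t "T+1" i n] by simp
  have P: "Phi A n t (Suc j) \<in> carrier_mat n n" if "j < T" for j
    using AB that t by (intro Phi_carrier) auto
  have PB: "Phi A n t (Suc j) * B j \<in> carrier_mat n m" if "j < T" for j
    using AB P that by (intro mult_carrier_mat[of _ n n]) auto
  have "(Gu A B n m T *\<^sub>v u) $ (t*n+i) = (\<Sum>q<T*m. Gu A B n m T $$ (t*n+i, q) * u $ q)"
    by (rule index_mult_mat_vec_sum[OF stacked_carrier(2) u r])
  also have "\<dots> = (\<Sum>j<T. \<Sum>c<m. Gu A B n m T $$ (t*n+i, j*m+c) * u $ (j*m+c))"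
    by (rule sum_blocks)
  also have "\<dots> = (\<Sum>j<T. if j < t then ((Phi A n t (Suc j) * B j) *\<^sub>v vec m (\<lambda>c. u $ (j*m+c))) $ i else 0)"
    using i r PB by (intro sum.cong refl) (auto simp: index_mult_mat_vec_sum[OF PB _ i] Gu_def intro!: sum.cong)
  also have "\<dots> = (\<Sum>j<t. ((Phi A n t (Suc j) * B j) *\<^sub>v vec m (\<lambda>c. u $ (j*m+c))) $ i)"
    using t by (rule sum_lessThan_if_less)
  also have "\<dots> = (\<Sum>j<t. (Phi A n t (Suc j) *\<^sub>v (B j *\<^sub>v vec m (\<lambda>c. u $ (j*m+c)))) $ i)"
    using AB P t by (intro sum.cong refl) (simp add: assoc_mult_mat_vec[of _ n n _ m])
  finally show ?thesis .
qed

lemma index_Gw_mult_vec: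
  assumes A: "\<And>k. k < T \<Longrightarrow> A k \<in> carrier_mat n n"
    and t: "t \<le> T" and i: "i < n" and u: "u \<in> carrier_vec (T*n)"
  shows "(Gw A n T *\<^sub>v u) $ (t*n+i) = (\<Sum>j<t. (Phi A n t (Suc j) *\<^sub>v vec n (\<lambda>c. u $ (j*n+c))) $ i)"
proof -
  have r: "t*n+i < (T+1)*n" using t i block_index_less[of t "T+1" i n] by simp
  have P: "Phi A n t (Suc j) \<in> carrier_mat n n" if "j < T" for j
    using A that t by (intro Phi_carrier) auto
  have "(Gw A n T *\<^sub>v u) $ (t*n+i) = (\<Sum>q<T*n. Gw A n T $$ (t*n+i, q) * u $ q)"
    by (rule index_mult_mat_vec_sum[OF stacked_carrier(3) u r])
  also have "\<dots> = (\<Sum>j<T. \<Sum>c<n. Gw A n T $$ (t*n+i, j*n+c) * u $ (j*n+c))"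
    by (rule sum_blocks)
  also have "\<dots> = (\<Sum>j<T. if j < t then (Phi A n t (Suc j) *\<^sub>v vec n (\<lambda>c. u $ (j*n+c))) $ i else 0)"
    using i r P by (intro sum.cong refl) (auto simp: index_mult_mat_vec_sum[OF P _ i] Gw_def intro!: sum.cong)
  also have "\<dots> = (\<Sum>j<t. (Phi A n t (Suc j) *\<^sub>v vec n (\<lambda>c. u $ (j*n+c))) $ i)"
    using t by (rule sum_lessThan_if_less)
  finally show ?thesis .
qed

lemma index_Pmat_mult_vec:
  assumes y: "y \<in> carrier_vec ((T+1)*n)" and i: "i < n"
  shows "(Pmat n T *\<^sub>v y) $ i = y $ (T*n+i)"
proof -
  have "(Pmat n T *\<^sub>v y) $ i = (\<Sum>q<(T+1)*n. Pmat n T $$ (i, q) * y $ q)"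
    by (rule index_mult_mat_vec_sum[OF stacked_carrier(4) y i])
  also have "\<dots> = (\<Sum>j<Suc T. \<Sum>c<n. Pmat n T $$ (i, j*n+c) * y $ (j*n+c))"
    using sum_blocks[of "\<lambda>q. Pmat n T $$ (i, q) * y $ q" "Suc T" n] by simp
  also have "\<dots> = (\<Sum>j<Suc T. \<Sum>c<n. if j = T \<and> c = i then y $ (j*n+c) else 0)"
    using i block_index_less[of _ "Suc T" _ n] by (intro sum.cong refl) (simp add: Pmat_def)
  also have "\<dots> = y $ (T*n+i)"
    using i by (simp add: sum.If_cases)
  finally show ?thesis .
qed

lemma stack_w_block:
  assumes "w j \<omega> \<in> carrier_vec n" "j < T"
  shows "vec n (\<lambda>c. stack_w n T w \<omega> $ (j*n+c)) = w j \<omega>"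
  using assms by (intro eq_vecI) (auto simp: stack_w_def)

lemma index_stack_K_mult_stack_w:
  assumes v: "valid_params n m T Ubar K" and w: "\<And>j. j < T \<Longrightarrow> w j \<omega> \<in> carrier_vec n"
    and t: "t < T" and c: "c < m"
  shows "(stack_K K n m T *\<^sub>v stack_w n T w \<omega>) $ (t*m+c) = (\<Sum>b<t. (K (t-1) b *\<^sub>v w b \<omega>) $ c)"
proof -
  have q: "t*m+c < T*m" using t c by simp
  have Kc: "K (t-1) b \<in> carrier_mat m n" if "b < t" for b
    using v that t unfolding valid_params_def by auto
  have "(stack_K K n m T *\<^sub>v stack_w n T w \<omega>) $ (t*m+c)
      = (\<Sum>b<T. \<Sum>r<n. stack_K K n m T $$ (t*m+c, b*n+r) * stack_w n T w \<omega> $ (b*n+r))"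
    by (simp add: index_mult_mat_vec_sum[OF stacked_carrier(7) stacked_carrier(8) q] sum_blocks)
  also have "\<dots> = (\<Sum>b<T. if b < t then (K (t-1) b *\<^sub>v w b \<omega>) $ c else 0)"
  proof (intro sum.cong refl)
    fix b assume b: "b \<in> {..<T}"
    show "(\<Sum>r<n. stack_K K n m T $$ (t*m+c, b*n+r) * stack_w n T w \<omega> $ (b*n+r))
        = (if b < t then (K (t-1) b *\<^sub>v w b \<omega>) $ c else 0)"
    proof (cases "b < t")
      case True
      have "(\<Sum>r<n. stack_K K n m T $$ (t*m+c, b*n+r) * stack_w n T w \<omega> $ (b*n+r))
          = (\<Sum>r<n. K (t-1) b $$ (c,r) * w b \<omega> $ r)"
        using True b c q by (auto simp: stack_K_def stack_w_def intro!: sum.cong)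
      also have "\<dots> = (K (t-1) b *\<^sub>v w b \<omega>) $ c"
        using b w by (intro index_mult_mat_vec_sum[OF Kc[OF True] _ c, symmetric]) simp
      finally show ?thesis using True by simp
    qed (use b c q in \<open>auto simp: stack_K_def intro!: sum.neutral\<close>)
  qed
  also have "\<dots> = (\<Sum>b<t. (K (t-1) b *\<^sub>v w b \<omega>) $ c)"
    using t by (intro sum_lessThan_if_less) simp
  finally show ?thesis .
qed

lemma ctrl_eq_stacked:
  assumes v: "valid_params n m T Ubar K" and w: "\<And>j. j < T \<Longrightarrow> w j \<omega> \<in> carrier_vec n" and t: "t < T"
  shows "ctrl m Ubar K w t \<omega>
    = vec m (\<lambda>c. (stack_u Ubar m T + stack_K K n m T *\<^sub>v stack_w n T w \<omega>) $ (t*m+c))"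
  using index_stack_K_mult_stack_w[of n m T Ubar K w \<omega> t, OF v w t] t
    carrier_matD[OF stacked_carrier(7)]
  by (intro eq_vecI) (auto simp: ctrl_def stack_u_def)

lemma sum_ctrl_inner_eq_stacked:
  assumes v: "valid_params n m T Ubar K" and w: "\<And>j. j < T \<Longrightarrow> w j \<omega> \<in> carrier_vec n"
  shows "(\<Sum>t<T. scalar_prod (ctrl m Ubar K w t \<omega>) (ctrl m Ubar K w t \<omega>))
       = (\<Sum>q<T*m. ((stack_u Ubar m T + stack_K K n m T *\<^sub>v stack_w n T w \<omega>) $ q)^2)"
  using ctrl_eq_stacked[of n m T Ubar K w \<omega>, OF v w]
  by (simp add: sum_blocks scalar_prod_def atLeast0LessThan power2_eq_square)

lemma traj_eq_transition_sum:
  assumes AB: "\<And>t. t < T \<Longrightarrow> A t \<in> carrier_mat n n \<and> B t \<in> carrier_mat n m"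
    and x0: "x0 \<omega> \<in> carrier_vec n" and w: "\<And>t. t < T \<Longrightarrow> w t \<omega> \<in> carrier_vec n" and t: "t \<le> T"
  shows "traj A B m Ubar K x0 w t \<omega> = Phi A n t 0 *\<^sub>v x0 \<omega>
      + vec n (\<lambda>i. \<Sum>s<t. (Phi A n t (Suc s) *\<^sub>v (B s *\<^sub>v ctrl m Ubar K w s \<omega> + w s \<omega>)) $ i)"
proof -
  have Bu: "B s *\<^sub>v ctrl m Ubar K w s \<omega> \<in> carrier_vec n" if "s < T" for s
    using AB[OF that] by (auto simp: ctrl_def)
  have step: "traj A B m Ubar K x0 w (Suc s) \<omega>
      = A s *\<^sub>v traj A B m Ubar K x0 w s \<omega> + (B s *\<^sub>v ctrl m Ubar K w s \<omega> + w s \<omega>)" if "s < t" for s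
  proof -
    have "A s *\<^sub>v traj A B m Ubar K x0 w s \<omega> \<in> carrier_vec n"
      using AB[of s] that t by (intro carrier_vecI) auto
    then show ?thesis
      using assoc_add_vec[OF _ Bu w] that t by simp
  qed
  have "traj A B m Ubar K x0 w t \<omega> = Phi A n t 0 *\<^sub>v traj A B m Ubar K x0 w 0 \<omega>
      + vec n (\<lambda>i. \<Sum>s<t. (Phi A n t (Suc s) *\<^sub>v (B s *\<^sub>v ctrl m Ubar K w s \<omega> + w s \<omega>)) $ i)"
    by (rule variation_of_constants[where x="\<lambda>s. traj A B m Ubar K x0 w s \<omega>"])
      (use AB Bu w x0 t step in auto)
  then show ?thesis by simp
qed

lemma traj_eq_stacked_block:
  assumes AB: "\<And>t. t < T \<Longrightarrow> A t \<in> carrier_mat n n \<and> B t \<in> carrier_mat n m"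
    and x0: "x0 \<omega> \<in> carrier_vec n" and w: "\<And>t. t < T \<Longrightarrow> w t \<omega> \<in> carrier_vec n"
    and v: "valid_params n m T Ubar K" and t: "t \<le> T" and i: "i < n"
  shows "traj A B m Ubar K x0 w t \<omega> $ i
    = (G0 A n T *\<^sub>v x0 \<omega> + Gu A B n m T *\<^sub>v (stack_u Ubar m T + stack_K K n m T *\<^sub>v stack_w n T w \<omega>)
       + Gw A n T *\<^sub>v stack_w n T w \<omega>) $ (t*n+i)"
proof -
  define us where "us = stack_u Ubar m T + stack_K K n m T *\<^sub>v stack_w n T w \<omega>"
  have us: "us \<in> carrier_vec (T*m)"
    unfolding us_def by (simp add: mult_mat_vec_carrier[of _ _ "T*n"])
  have Phi: "Phi A n t s \<in> carrier_mat n n" for s using AB t by (intro Phi_carrier) auto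
  have Bu: "B s *\<^sub>v ctrl m Ubar K w s \<omega> \<in> carrier_vec n" if "s < T" for s
    using AB[OF that] by (auto simp: ctrl_def)
  have "traj A B m Ubar K x0 w t \<omega> $ i = (Phi A n t 0 *\<^sub>v x0 \<omega>) $ i
      + (\<Sum>s<t. (Phi A n t (Suc s) *\<^sub>v (B s *\<^sub>v ctrl m Ubar K w s \<omega>)) $ i + (Phi A n t (Suc s) *\<^sub>v w s \<omega>) $ i)"
    using traj_eq_transition_sum[of T A n B m x0 \<omega> w t Ubar K, OF AB x0 w t] i Phi x0 Bu w t
      carrier_matD[OF Phi]
    by (auto simp: mult_add_distrib_mat_vec[OF Phi] intro!: sum.cong)
  also have "\<dots> = (G0 A n T *\<^sub>v x0 \<omega>) $ (t*n+i) + (Gu A B n m T *\<^sub>v us) $ (t*n+i)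
      + (Gw A n T *\<^sub>v stack_w n T w \<omega>) $ (t*n+i)"
    using AB x0 w v t i us
    by (simp add: index_G0_mult_vec index_Gu_mult_vec index_Gw_mult_vec sum.distrib us_def
        ctrl_eq_stacked stack_w_block)
  also have "\<dots> = (G0 A n T *\<^sub>v x0 \<omega> + Gu A B n m T *\<^sub>v us + Gw A n T *\<^sub>v stack_w n T w \<omega>) $ (t*n+i)"
    using t i block_index_less[of t "T+1" i n] carrier_matD[OF stacked_carrier(1)]
      carrier_matD[OF stacked_carrier(2)] carrier_matD[OF stacked_carrier(3)]
    by simp
  finally show ?thesis unfolding us_def .
qed

lemma traj_final_eq_affine:
  assumes AB: "\<And>t. t < T \<Longrightarrow> A t \<in> carrier_mat n n \<and> B t \<in> carrier_mat n m"
    and x0: "x0 \<omega> \<in> carrier_vec n" and w: "\<And>t. t < T \<Longrightarrow> w t \<omega> \<in> carrier_vec n"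
    and v: "valid_params n m T Ubar K"
  shows "traj A B m Ubar K x0 w T \<omega> = Pmat n T *\<^sub>v (Gu A B n m T *\<^sub>v stack_u Ubar m T)
      + (Pmat n T * G0 A n T) *\<^sub>v x0 \<omega>
      + (Pmat n T * (Gw A n T + Gu A B n m T * stack_K K n m T)) *\<^sub>v stack_w n T w \<omega>"
proof -
  let ?us = "stack_u Ubar m T + stack_K K n m T *\<^sub>v stack_w n T w \<omega>"
  have "traj A B m Ubar K x0 w T \<omega>
      = Pmat n T *\<^sub>v (G0 A n T *\<^sub>v x0 \<omega> + Gu A B n m T *\<^sub>v ?us + Gw A n T *\<^sub>v stack_w n T w \<omega>)"
  proof (rule eq_vecI)
    fix i assume "i < dim_vec (Pmat n T *\<^sub>v (G0 A n T *\<^sub>v x0 \<omega> + Gu A B n m T *\<^sub>v ?us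
      + Gw A n T *\<^sub>v stack_w n T w \<omega>))"
    then have i: "i < n" by (simp add: Pmat_def)
    have "?us \<in> carrier_vec (T*m)" by (simp add: mult_mat_vec_carrier[of _ _ "T*n"])
    then have "G0 A n T *\<^sub>v x0 \<omega> + Gu A B n m T *\<^sub>v ?us + Gw A n T *\<^sub>v stack_w n T w \<omega>
        \<in> carrier_vec ((T+1)*n)"
      using x0 by (meson add_carrier_vec mult_mat_vec_carrier stacked_carrier)
    then show "traj A B m Ubar K x0 w T \<omega> $ i = (Pmat n T *\<^sub>v (G0 A n T *\<^sub>v x0 \<omega> + Gu A B n m T *\<^sub>v ?us
      + Gw A n T *\<^sub>v stack_w n T w \<omega>)) $ i"
      using traj_eq_stacked_block[of T A n B m x0 \<omega> w Ubar K T i, OF AB x0 w v le_refl i]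
      by (simp add: index_Pmat_mult_vec[OF _ i])
  next
    show "dim_vec (traj A B m Ubar K x0 w T \<omega>) = dim_vec (Pmat n T *\<^sub>v (G0 A n T *\<^sub>v x0 \<omega>
      + Gu A B n m T *\<^sub>v ?us + Gw A n T *\<^sub>v stack_w n T w \<omega>))"
      using x0 w by (cases T) (auto simp: Pmat_def)
  qed
  also have "\<dots> = Pmat n T *\<^sub>v (Gu A B n m T *\<^sub>v stack_u Ubar m T)
      + (Pmat n T * G0 A n T) *\<^sub>v x0 \<omega>
      + (Pmat n T * (Gw A n T + Gu A B n m T * stack_K K n m T)) *\<^sub>v stack_w n T w \<omega>"
    by (rule mult_mat_vec_closed_loop[OF stacked_carrier(4,1,2,3,7) x0 stacked_carrier(6,8)])
  finally show ?thesis .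
qed

lemma Pmat_hfun_sandwich:
  fixes A B :: "nat \<Rightarrow> real mat"
  assumes K: "K \<in> carrier_mat (T*m) (T*n)" and S: "Sigma0 \<in> carrier_mat n n"
  defines "H \<equiv> Gw A n T + Gu A B n m T * K"
  shows "Pmat n T * hfun A B Sigma0 W n m T K * transpose_mat (Pmat n T)
    = (Pmat n T * G0 A n T) * Sigma0 * transpose_mat (Pmat n T * G0 A n T)
      + (Pmat n T * H) * Wbold W n T * transpose_mat (Pmat n T * H)"
proof -
  have H: "H \<in> carrier_mat ((T+1)*n) (T*n)"
    unfolding H_def using K by (intro add_carrier_mat mult_carrier_mat[of _ _ "T*m"]) (rule stacked_carrier)+
  have "G0 A n T * Sigma0 * transpose_mat (G0 A n T) \<in> carrier_mat ((T+1)*n) ((T+1)*n)"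
    "H * Wbold W n T * transpose_mat H \<in> carrier_mat ((T+1)*n) ((T+1)*n)"
    using S H stacked_carrier(1)[of A n T] stacked_carrier(5)[of W n T] by auto
  then show ?thesis
    unfolding hfun_def H_def[symmetric]
    by (simp add: sandwich_add[OF stacked_carrier(4)] sandwich_mult[OF stacked_carrier(4) stacked_carrier(1) S]
        sandwich_mult[OF stacked_carrier(4) H stacked_carrier(5)])
qed

locale disturbed_linear_system = prob_space M
  for M :: "'a measure" +
  fixes n m T :: nat and A B :: "nat \<Rightarrow> real mat" and W :: "real mat"
    and x0 :: "'a \<Rightarrow> real vec" and w :: "nat \<Rightarrow> 'a \<Rightarrow> real vec"
  assumes AB: "\<And>t. t < T \<Longrightarrow> A t \<in> carrier_mat n n \<and> B t \<in> carrier_mat n m"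
    and x0_dim: "\<And>\<omega>. \<omega> \<in> space M \<Longrightarrow> x0 \<omega> \<in> carrier_vec n"
    and w_dim: "\<And>t \<omega>. t < T \<Longrightarrow> \<omega> \<in> space M \<Longrightarrow> w t \<omega> \<in> carrier_vec n"
    and x0_meas: "\<And>i. i < n \<Longrightarrow> (\<lambda>\<omega>. x0 \<omega> $ i) \<in> borel_measurable M"
    and w_meas: "\<And>t i. t < T \<Longrightarrow> i < n \<Longrightarrow> (\<lambda>\<omega>. w t \<omega> $ i) \<in> borel_measurable M"
    and x0_L2: "\<And>i. i < n \<Longrightarrow> integrable M (\<lambda>\<omega>. (x0 \<omega> $ i)^2)"
    and w_L2: "\<And>t i. t < T \<Longrightarrow> i < n \<Longrightarrow> integrable M (\<lambda>\<omega>. (w t \<omega> $ i)^2)"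
    and w_mean: "\<And>t. t < T \<Longrightarrow> mean_vec M n (w t) = 0\<^sub>v n"
    and w_cov: "\<And>t s. t < T \<Longrightarrow> s < T \<Longrightarrow> cross_mat M n (w t) (w s) = (if t = s then W else 0\<^sub>m n n)"
    and x0_w: "\<And>t. t < T \<Longrightarrow> cross_mat M n x0 (w t) = 0\<^sub>m n n"
begin

lemma x0_square_integrable: "k < n \<Longrightarrow> square_integrable M (\<lambda>\<omega>. x0 \<omega> $ k)"
  using x0_meas x0_L2 unfolding square_integrable_def by auto

lemma index_stack_w: "q < T*n \<Longrightarrow> stack_w n T w \<omega> $ q = w (q div n) \<omega> $ (q mod n)"
  by (simp add: stack_w_def)

lemma stack_w_square_integrable: "q < T*n \<Longrightarrow> square_integrable M (\<lambda>\<omega>. stack_w n T w \<omega> $ q)"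
  using w_meas w_L2 div_mod_less_mult[of q T n] unfolding square_integrable_def
  by (simp add: index_stack_w)

lemma integral_stack_w: "q < T*n \<Longrightarrow> (\<integral>\<omega>. stack_w n T w \<omega> $ q \<partial>M) = 0"
  using w_mean div_mod_less_mult[of q T n]
  by (simp add: index_stack_w mean_vec_def vec_eq_iff)

lemma mean_stack_w: "mean_vec M (T*n) (stack_w n T w) = 0\<^sub>v (T*n)"
  using integral_stack_w by (intro eq_vecI) (auto simp: mean_vec_def)

lemma cov_stack_w: "cov_mat M (T*n) (stack_w n T w) = Wbold W n T"
proof (rule eq_matI)
  fix p q assume "p < dim_row (Wbold W n T)" "q < dim_col (Wbold W n T)"
  then have p: "p < T*n" and q: "q < T*n" by (auto simp: Wbold_def)
  have "cov_mat M (T*n) (stack_w n T w) $$ (p,q)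
      = cross_mat M n (w (p div n)) (w (q div n)) $$ (p mod n, q mod n)"
    using div_mod_less_mult[OF p] div_mod_less_mult[OF q] p q
    by (simp add: cov_mat_def mean_stack_w cross_mat_def index_stack_w)
  also have "\<dots> = Wbold W n T $$ (p,q)"
    using w_cov div_mod_less_mult[OF p] div_mod_less_mult[OF q] p q by (simp add: Wbold_def)
  finally show "cov_mat M (T*n) (stack_w n T w) $$ (p,q) = Wbold W n T $$ (p,q)" .
qed (auto simp: cov_mat_def Wbold_def)

lemma x0_stack_w_uncorrelated:
  assumes k: "k < n" and l: "l < T*n"
  shows "(\<integral>\<omega>. (x0 \<omega> $ k - mean_vec M n x0 $ k) * (stack_w n T w \<omega> $ l - 0\<^sub>v (T*n) $ l) \<partial>M) = 0"
proof -
  have "(\<integral>\<omega>. (x0 \<omega> $ k - mean_vec M n x0 $ k) * (stack_w n T w \<omega> $ l - 0\<^sub>v (T*n) $ l) \<partial>M)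
      = (\<integral>\<omega>. x0 \<omega> $ k * stack_w n T w \<omega> $ l \<partial>M) - mean_vec M n x0 $ k * (\<integral>\<omega>. stack_w n T w \<omega> $ l \<partial>M)"
    using l square_integrable_mult_integrable[OF x0_square_integrable[OF k] stack_w_square_integrable[OF l]]
      square_integrable_integrable[OF stack_w_square_integrable[OF l]]
    by (simp add: left_diff_distrib)
  also have "(\<integral>\<omega>. x0 \<omega> $ k * stack_w n T w \<omega> $ l \<partial>M) = cross_mat M n x0 (w (l div n)) $$ (k, l mod n)"
    using div_mod_less_mult[OF l] k by (simp add: cross_mat_def index_stack_w[OF l])
  finally show ?thesis
    using x0_w div_mod_less_mult[OF l] k integral_stack_w[OF l] by simp
qed

lemma moments_traj_final:
  assumes v: "valid_params n m T Ubar K"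
  shows "mean_vec M n (traj A B m Ubar K x0 w T)
      = Pmat n T *\<^sub>v (Gu A B n m T *\<^sub>v stack_u Ubar m T + G0 A n T *\<^sub>v mean_vec M n x0)"
    and "cov_mat M n (traj A B m Ubar K x0 w T)
      = Pmat n T * hfun A B (cov_mat M n x0) W n m T (stack_K K n m T) * transpose_mat (Pmat n T)"
proof -
  define H where "H = Gw A n T + Gu A B n m T * stack_K K n m T"
  have H: "H \<in> carrier_mat ((T+1)*n) (T*n)"
    unfolding H_def by (intro add_carrier_mat mult_carrier_mat[of _ _ "T*m"]) (rule stacked_carrier)+
  have mu0: "mean_vec M n x0 \<in> carrier_vec n" and Sigma0: "cov_mat M n x0 \<in> carrier_mat n n"
    by (simp_all add: mean_vec_def cov_mat_def)
  have X: "traj A B m Ubar K x0 w T \<omega> = Pmat n T *\<^sub>v (Gu A B n m T *\<^sub>v stack_u Ubar m T)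
      + (Pmat n T * G0 A n T) *\<^sub>v x0 \<omega> + (Pmat n T * H) *\<^sub>v stack_w n T w \<omega>"
    if "\<omega> \<in> space M" for \<omega>
    unfolding H_def by (rule traj_final_eq_affine[of T A n B m x0 \<omega> w Ubar K, OF AB x0_dim[OF that] w_dim[OF _ that] v])
  note mean_traj = mean_affine[OF x0_dim stacked_carrier(8) x0_square_integrable stack_w_square_integrable
      refl mean_stack_w mult_carrier_mat[OF stacked_carrier(4,1)] mult_carrier_mat[OF stacked_carrier(4) H]
      mult_mat_vec_carrier[OF stacked_carrier(4) mult_mat_vec_carrier[OF stacked_carrier(2,6)]] X]
  note cov_traj = cov_affine_uncorrelated[OF x0_dim stacked_carrier(8) x0_square_integrable stack_w_square_integrable
      refl mean_stack_w refl cov_stack_w x0_stack_w_uncorrelated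
      mult_carrier_mat[OF stacked_carrier(4,1)] mult_carrier_mat[OF stacked_carrier(4) H]
      mult_mat_vec_carrier[OF stacked_carrier(4) mult_mat_vec_carrier[OF stacked_carrier(2,6)]] X]
  show "mean_vec M n (traj A B m Ubar K x0 w T)
      = Pmat n T *\<^sub>v (Gu A B n m T *\<^sub>v stack_u Ubar m T + G0 A n T *\<^sub>v mean_vec M n x0)"
  proof -
    have "Pmat n T *\<^sub>v (Gu A B n m T *\<^sub>v stack_u Ubar m T + G0 A n T *\<^sub>v mean_vec M n x0)
        = Pmat n T *\<^sub>v (Gu A B n m T *\<^sub>v stack_u Ubar m T) + Pmat n T *\<^sub>v (G0 A n T *\<^sub>v mean_vec M n x0)"
      by (rule mult_add_distrib_mat_vec[OF stacked_carrier(4) mult_mat_vec_carrier[OF stacked_carrier(2,6)]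
            mult_mat_vec_carrier[OF stacked_carrier(1) mu0]])
    also have "Pmat n T *\<^sub>v (G0 A n T *\<^sub>v mean_vec M n x0) = (Pmat n T * G0 A n T) *\<^sub>v mean_vec M n x0"
      by (rule assoc_mult_mat_vec[OF stacked_carrier(4,1) mu0, symmetric])
    finally have "Pmat n T *\<^sub>v (Gu A B n m T *\<^sub>v stack_u Ubar m T + G0 A n T *\<^sub>v mean_vec M n x0)
        = Pmat n T *\<^sub>v (Gu A B n m T *\<^sub>v stack_u Ubar m T) + (Pmat n T * G0 A n T) *\<^sub>v mean_vec M n x0" .
    moreover have "Pmat n T *\<^sub>v (Gu A B n m T *\<^sub>v stack_u Ubar m T) + (Pmat n T * G0 A n T) *\<^sub>v mean_vec M n x0
        \<in> carrier_vec n"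
      using mu0 by (meson add_carrier_vec mult_carrier_mat mult_mat_vec_carrier stacked_carrier)
    ultimately show ?thesis
      using mean_traj(1) mult_mat_vec_zero[OF mult_carrier_mat[OF stacked_carrier(4) H]] by simp
  qed
  show "cov_mat M n (traj A B m Ubar K x0 w T)
      = Pmat n T * hfun A B (cov_mat M n x0) W n m T (stack_K K n m T) * transpose_mat (Pmat n T)"
    using cov_traj Pmat_hfun_sandwich[OF stacked_carrier(7) Sigma0] unfolding H_def by simp
qed

lemma expected_control_energy:
  assumes v: "valid_params n m T Ubar K"
  shows "(\<integral>\<omega>. (\<Sum>t<T. scalar_prod (ctrl m Ubar K w t \<omega>) (ctrl m Ubar K w t \<omega>)) \<partial>M)
    = scalar_prod (stack_u Ubar m T) (stack_u Ubar m T)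
      + mat_trace (stack_K K n m T * Wbold W n T * transpose_mat (stack_K K n m T))"
proof -
  define U where "U \<omega> = stack_u Ubar m T + stack_K K n m T *\<^sub>v stack_w n T w \<omega>" for \<omega>
  note moments = moments_affine[OF stacked_carrier(8) stack_w_square_integrable mean_stack_w cov_stack_w
      stacked_carrier(7) stacked_carrier(6) U_def]
  have "(\<integral>\<omega>. (\<Sum>t<T. scalar_prod (ctrl m Ubar K w t \<omega>) (ctrl m Ubar K w t \<omega>)) \<partial>M)
      = (\<integral>\<omega>. (\<Sum>q<T*m. (U \<omega> $ q)^2) \<partial>M)"
    unfolding U_def
    by (intro Bochner_Integration.integral_cong refl) (simp add: sum_ctrl_inner_eq_stacked[OF v] w_dim)
  also have "\<dots> = (\<Sum>q<T*m. \<integral>\<omega>. (U \<omega> $ q)^2 \<partial>M)"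
    using moments(3) unfolding square_integrable_def by (intro Bochner_Integration.integral_sum) auto
  also have "\<dots> = mat_trace (cov_mat M (T*m) U) + scalar_prod (mean_vec M (T*m) U) (mean_vec M (T*m) U)"
    using moments(3) by (rule sum_second_moments)
  finally show ?thesis
    using moments(1,2) mult_mat_vec_zero[OF stacked_carrier(7)] by (simp add: add.commute)
qed

end

section \<open>The convex program\<close>

lemma quad_form_Wbold:
  "quad_form (Wbold W n T) (T*n) x = (\<Sum>a<T. quad_form W n (\<lambda>r. x (a*n+r)))"
proof -
  have "quad_form (Wbold W n T) (T*n) x
      = (\<Sum>a<T. \<Sum>r<n. \<Sum>b<T. \<Sum>s<n. x (a*n+r) * x (b*n+s) * Wbold W n T $$ (a*n+r, b*n+s))"
    unfolding quad_form_def by (simp add: sum_blocks)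
  also have "\<dots> = (\<Sum>a<T. \<Sum>r<n. \<Sum>b<T. if b = a then (\<Sum>s<n. x (a*n+r) * x (a*n+s) * W $$ (r, s)) else 0)"
    by (intro sum.cong refl) (auto simp: Wbold_def)
  finally show ?thesis
    unfolding quad_form_def by simp
qed

lemma quad_form_Wbold_nonneg: "sym_psd n W \<Longrightarrow> quad_form (Wbold W n T) (T*n) x \<ge> 0"
  unfolding quad_form_Wbold by (intro sum_nonneg quad_form_nonneg)

lemma calJ1_eq_quad_form:
  assumes K: "K \<in> carrier_mat (T*m) (T*n)" and S: "Sigma0 \<in> carrier_mat n n"
  shows "calJ1 A B Sigma0 W n m T K
    = mat_trace ((Pmat n T * G0 A n T) * Sigma0 * transpose_mat (Pmat n T * G0 A n T))
      + (\<Sum>i<n. quad_form (Wbold W n T) (T*n) (\<lambda>k. (Pmat n T * (Gw A n T + Gu A B n m T * K)) $$ (i,k)))"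
proof -
  define H where "H = Gw A n T + Gu A B n m T * K"
  have PH: "Pmat n T * H \<in> carrier_mat n (T*n)"
    unfolding H_def using K
    by (intro mult_carrier_mat[OF stacked_carrier(4)] add_carrier_mat mult_carrier_mat[of _ _ "T*m"])
      (rule stacked_carrier)+
  have PG: "Pmat n T * G0 A n T \<in> carrier_mat n n"
    by (rule mult_carrier_mat[OF stacked_carrier(4,1)])
  have "(Pmat n T * G0 A n T) * Sigma0 * transpose_mat (Pmat n T * G0 A n T) \<in> carrier_mat n n"
    "(Pmat n T * H) * Wbold W n T * transpose_mat (Pmat n T * H) \<in> carrier_mat n n"
    using PG PH S stacked_carrier(5)[of W n T] by (meson mult_carrier_mat transpose_carrier_mat)+
  then show ?thesis
    unfolding calJ1_def Pmat_hfun_sandwich[OF K S] H_def[symmetric]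
    by (simp only: mat_trace_add mat_trace_sandwich[OF PH stacked_carrier(5)])
qed

lemma control_energy_eq_quad_form:
  assumes "u \<in> carrier_vec (T*m)" "K \<in> carrier_mat (T*m) (T*n)"
  shows "scalar_prod u u + mat_trace (K * Wbold W n T * transpose_mat K)
     = (\<Sum>i<T*m. (u $ i)^2) + (\<Sum>i<T*m. quad_form (Wbold W n T) (T*n) (\<lambda>k. K $$ (i,k)))"
  using assms by (simp add: mat_trace_sandwich scalar_prod_def atLeast0LessThan power2_eq_square)

lemma stack_in_Dset: "(stack_u Ubar m T, stack_K K n m T) \<in> Dset n m T"
  by (auto simp: Dset_def stack_K_def)

lemma Dset_is_stack:
  assumes "p \<in> Dset n m T"
  shows "\<exists>Ubar K. valid_params n m T Ubar K \<and> p = (stack_u Ubar m T, stack_K K n m T)"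
proof -
  obtain ub cK where p: "p = (ub, cK)" and ub: "ub \<in> carrier_vec (T*m)" and cK: "cK \<in> carrier_mat (T*m) (T*n)"
    and z: "\<And>i j. i < T*m \<Longrightarrow> j < T*n \<Longrightarrow> \<not> (j div n < i div m) \<Longrightarrow> cK $$ (i,j) = 0"
    using assms unfolding Dset_def by auto
  define Ubar where "Ubar t = vec m (\<lambda>c. ub $ (t*m+c))" for t
  define K where "K t tau = mat m n (\<lambda>(c,r). cK $$ ((t+1)*m + c, tau*n + r))" for t tau
  have "stack_u Ubar m T = ub"
    using ub div_mod_less_mult[of _ T m] by (intro eq_vecI) (auto simp: stack_u_def Ubar_def)
  moreover have "stack_K K n m T = cK"
  proof (rule eq_matI)
    fix i j assume "i < dim_row cK" "j < dim_col cK"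
    then have i: "i < T*m" and j: "j < T*n" using cK by auto
    show "stack_K K n m T $$ (i,j) = cK $$ (i,j)"
    proof (cases "j div n < i div m")
      case True
      then have "(i div m - 1 + 1) * m + i mod m = i" by simp
      then show ?thesis using True i j div_mod_less_mult[OF i] div_mod_less_mult[OF j]
        by (simp add: stack_K_def K_def)
    qed (use i j z in \<open>simp add: stack_K_def\<close>)
  qed (use cK in \<open>auto simp: stack_K_def\<close>)
  moreover have "valid_params n m T Ubar K"
    unfolding valid_params_def Ubar_def K_def by auto
  ultimately show ?thesis using p by blast
qed

lemma Dset_convex_comb:
  assumes "(u1, K1) \<in> Dset n m T" "(u2, K2) \<in> Dset n m T"
  shows "(th \<cdot>\<^sub>v u1 + (1 - th) \<cdot>\<^sub>v u2, th \<cdot>\<^sub>m K1 + (1 - th) \<cdot>\<^sub>m K2) \<in> Dset n m T"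
  using assms unfolding Dset_def by auto

lemma convex_obj_calJ1:
  assumes W: "sym_psd n W" and S: "Sigma0 \<in> carrier_mat n n"
  shows "convex_obj (Dset n m T) (calJ1 A B Sigma0 W n m T)"
  unfolding convex_obj_def
proof (intro ballI allI impI)
  fix p q and th :: real
  assume "p \<in> Dset n m T" "q \<in> Dset n m T" and th: "0 \<le> th \<and> th \<le> 1"
  then have K1: "snd p \<in> carrier_mat (T*m) (T*n)" and K2: "snd q \<in> carrier_mat (T*m) (T*n)"
    unfolding Dset_def by auto
  define c where "c = mat_trace ((Pmat n T * G0 A n T) * Sigma0 * transpose_mat (Pmat n T * G0 A n T))"
  define H where "H K = Pmat n T * (Gw A n T + Gu A B n m T * K)" for K
  define Q where "Q K i = quad_form (Wbold W n T) (T*n) (\<lambda>k. H K $$ (i,k))" for K i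
  have J: "calJ1 A B Sigma0 W n m T K = c + (\<Sum>i<n. Q K i)" if "K \<in> carrier_mat (T*m) (T*n)" for K
    unfolding c_def Q_def H_def by (rule calJ1_eq_quad_form[OF that S])
  have "Q (th \<cdot>\<^sub>m snd p + (1 - th) \<cdot>\<^sub>m snd q) i \<le> th * Q (snd p) i + (1 - th) * Q (snd q) i"
    if "i < n" for i
  proof -
    have "Q (th \<cdot>\<^sub>m snd p + (1 - th) \<cdot>\<^sub>m snd q) i
        = quad_form (Wbold W n T) (T*n) (\<lambda>k. th * H (snd p) $$ (i,k) + (1 - th) * H (snd q) $$ (i,k))"
      unfolding Q_def H_def
      by (intro quad_form_cong index_affine_mat_convex_comb[OF stacked_carrier(4,3,2) K1 K2 that])
    also have "\<dots> \<le> th * Q (snd p) i + (1 - th) * Q (snd q) i"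
      unfolding Q_def using th by (intro quad_form_convex quad_form_Wbold_nonneg[OF W]) auto
    finally show ?thesis .
  qed
  then have "(\<Sum>i<n. Q (th \<cdot>\<^sub>m snd p + (1 - th) \<cdot>\<^sub>m snd q) i)
      \<le> (\<Sum>i<n. th * Q (snd p) i + (1 - th) * Q (snd q) i)"
    by (intro sum_mono) auto
  also have "\<dots> = th * (\<Sum>i<n. Q (snd p) i) + (1 - th) * (\<Sum>i<n. Q (snd q) i)"
    by (simp add: sum.distrib sum_distrib_left)
  finally have "c + (\<Sum>i<n. Q (th \<cdot>\<^sub>m snd p + (1 - th) \<cdot>\<^sub>m snd q) i)
      \<le> th * (c + (\<Sum>i<n. Q (snd p) i)) + (1 - th) * (c + (\<Sum>i<n. Q (snd q) i))"
    by (simp add: algebra_simps)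
  moreover have "th \<cdot>\<^sub>m snd p + (1 - th) \<cdot>\<^sub>m snd q \<in> carrier_mat (T*m) (T*n)"
    using K1 K2 by simp
  ultimately show "calJ1 A B Sigma0 W n m T (th \<cdot>\<^sub>m snd p + (1 - th) \<cdot>\<^sub>m snd q)
      \<le> th * calJ1 A B Sigma0 W n m T (snd p) + (1 - th) * calJ1 A B Sigma0 W n m T (snd q)"
    using K1 K2 by (simp only: J)
qed

lemma convex_pairs_Int: "convex_pairs S \<Longrightarrow> convex_pairs S' \<Longrightarrow> convex_pairs (S \<inter> S')"
  unfolding convex_pairs_def by blast

lemma control_energy_convex:
  assumes W: "sym_psd n W" and th: "0 \<le> th" "th \<le> 1"
    and u: "u1 \<in> carrier_vec (T*m)" "u2 \<in> carrier_vec (T*m)"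
    and K: "K1 \<in> carrier_mat (T*m) (T*n)" "K2 \<in> carrier_mat (T*m) (T*n)"
  defines "u \<equiv> th \<cdot>\<^sub>v u1 + (1 - th) \<cdot>\<^sub>v u2" and "K \<equiv> th \<cdot>\<^sub>m K1 + (1 - th) \<cdot>\<^sub>m K2"
  shows "scalar_prod u u + mat_trace (K * Wbold W n T * transpose_mat K)
    \<le> th * (scalar_prod u1 u1 + mat_trace (K1 * Wbold W n T * transpose_mat K1))
      + (1 - th) * (scalar_prod u2 u2 + mat_trace (K2 * Wbold W n T * transpose_mat K2))"
proof -
  define E where "E u K = (\<Sum>i<T*m. (u $ i)^2) + (\<Sum>i<T*m. quad_form (Wbold W n T) (T*n) (\<lambda>k. K $$ (i,k)))"
    for u K
  have "(u $ i)^2 \<le> th * (u1 $ i)^2 + (1 - th) * (u2 $ i)^2" if "i < T*m" for i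
    using that u th convex_onD[OF convex_power2, of "1 - th" "u1 $ i" "u2 $ i"] by (simp add: u_def)
  moreover have "quad_form (Wbold W n T) (T*n) (\<lambda>k. K $$ (i,k))
      \<le> th * quad_form (Wbold W n T) (T*n) (\<lambda>k. K1 $$ (i,k))
        + (1 - th) * quad_form (Wbold W n T) (T*n) (\<lambda>k. K2 $$ (i,k))" if "i < T*m" for i
  proof -
    have "quad_form (Wbold W n T) (T*n) (\<lambda>k. K $$ (i,k))
        = quad_form (Wbold W n T) (T*n) (\<lambda>k. th * K1 $$ (i,k) + (1 - th) * K2 $$ (i,k))"
      using that K by (intro quad_form_cong) (simp add: K_def)
    then show ?thesis
      using th quad_form_convex[OF quad_form_Wbold_nonneg[OF W], of th] by simp
  qed
  ultimately have "E u K \<le> (\<Sum>i<T*m. th * (u1 $ i)^2 + (1 - th) * (u2 $ i)^2)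
      + (\<Sum>i<T*m. th * quad_form (Wbold W n T) (T*n) (\<lambda>k. K1 $$ (i,k))
        + (1 - th) * quad_form (Wbold W n T) (T*n) (\<lambda>k. K2 $$ (i,k)))"
    unfolding E_def by (intro add_mono sum_mono) auto
  also have "\<dots> = th * E u1 K1 + (1 - th) * E u2 K2"
    unfolding E_def by (simp add: sum.distrib sum_distrib_left distrib_left add_ac)
  finally have "E u K \<le> th * E u1 K1 + (1 - th) * E u2 K2" .
  moreover have "u \<in> carrier_vec (T*m)" "K \<in> carrier_mat (T*m) (T*n)"
    using u K unfolding u_def K_def by auto
  ultimately show ?thesis
    using u K unfolding E_def by (simp add: control_energy_eq_quad_form)
qed

lemma convex_pairs_D1set:
  assumes W: "sym_psd n W"
  shows "convex_pairs (D1set W rho n m T)"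
  unfolding convex_pairs_def
proof (intro ballI allI impI)
  fix p q and th :: real
  assume p: "p \<in> D1set W rho n m T" and q: "q \<in> D1set W rho n m T" and th: "0 \<le> th \<and> th \<le> 1"
  obtain u1 K1 u2 K2 where pq: "p = (u1, K1)" "q = (u2, K2)" by force
  have D: "(u1, K1) \<in> Dset n m T" "(u2, K2) \<in> Dset n m T"
    using p q unfolding pq D1set_def by auto
  then have "u1 \<in> carrier_vec (T*m)" "u2 \<in> carrier_vec (T*m)"
    "K1 \<in> carrier_mat (T*m) (T*n)" "K2 \<in> carrier_mat (T*m) (T*n)"
    unfolding Dset_def by auto
  note energy = control_energy_convex[OF W _ _ this, of th]
  have "scalar_prod u1 u1 + mat_trace (K1 * Wbold W n T * transpose_mat K1) \<le> rho^2"
    "scalar_prod u2 u2 + mat_trace (K2 * Wbold W n T * transpose_mat K2) \<le> rho^2"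
    using p q unfolding pq D1set_def by auto
  then have "th * (scalar_prod u1 u1 + mat_trace (K1 * Wbold W n T * transpose_mat K1))
      + (1 - th) * (scalar_prod u2 u2 + mat_trace (K2 * Wbold W n T * transpose_mat K2))
      \<le> th * rho^2 + (1 - th) * rho^2"
    using th by (intro add_mono mult_left_mono) auto
  then show "(th \<cdot>\<^sub>v fst p + (1 - th) \<cdot>\<^sub>v fst q, th \<cdot>\<^sub>m snd p + (1 - th) \<cdot>\<^sub>m snd q) \<in> D1set W rho n m T"
    using energy th Dset_convex_comb[OF D] unfolding D1set_def pq by (simp add: algebra_simps)
qed

lemma convex_pairs_D2set:
  assumes mu0: "mu0 \<in> carrier_vec n" and muf: "muf \<in> carrier_vec n"
  shows "convex_pairs (D2set A B mu0 muf n m T)"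
  unfolding convex_pairs_def
proof (intro ballI allI impI)
  fix p q and th :: real
  assume p: "p \<in> D2set A B mu0 muf n m T" and q: "q \<in> D2set A B mu0 muf n m T"
  obtain u1 K1 u2 K2 where pq: "p = (u1, K1)" "q = (u2, K2)" by force
  let ?c = "G0 A n T *\<^sub>v mu0"
  have c: "?c \<in> carrier_vec ((T+1)*n)" by (rule mult_mat_vec_carrier[OF stacked_carrier(1) mu0])
  have D: "(u1, K1) \<in> Dset n m T" "(u2, K2) \<in> Dset n m T"
    using p q unfolding pq D2set_def by auto
  then have u: "u1 \<in> carrier_vec (T*m)" "u2 \<in> carrier_vec (T*m)" unfolding Dset_def by auto
  have P: "dim_row (Pmat n T) = n" by (simp add: Pmat_def)
  have mean: "Pmat n T *\<^sub>v (Gu A B n m T *\<^sub>v u + ?c) \<in> carrier_vec n" if "u \<in> carrier_vec (T*m)" for u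
    using that c by (meson add_carrier_vec mult_mat_vec_carrier stacked_carrier)
  have e: "Pmat n T *\<^sub>v (Gu A B n m T *\<^sub>v u1 + ?c) = muf" "Pmat n T *\<^sub>v (Gu A B n m T *\<^sub>v u2 + ?c) = muf"
    using p q mean[OF u(1)] mean[OF u(2)] muf P unfolding pq D2set_def by (auto simp: vec_eq_iff)
  have "Pmat n T *\<^sub>v (Gu A B n m T *\<^sub>v (th \<cdot>\<^sub>v u1 + (1 - th) \<cdot>\<^sub>v u2) + ?c) = muf"
  proof (rule eq_vecI)
    fix i assume "i < dim_vec muf"
    then have i: "i < n" using muf by simp
    have "(Pmat n T *\<^sub>v (Gu A B n m T *\<^sub>v (th \<cdot>\<^sub>v u1 + (1 - th) \<cdot>\<^sub>v u2) + ?c)) $ i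
        = th * muf $ i + (1 - th) * muf $ i"
      unfolding index_affine_vec_convex_comb[OF stacked_carrier(4,2) c u i] e ..
    then show "(Pmat n T *\<^sub>v (Gu A B n m T *\<^sub>v (th \<cdot>\<^sub>v u1 + (1 - th) \<cdot>\<^sub>v u2) + ?c)) $ i = muf $ i"
      by (simp add: algebra_simps)
  qed (use muf P in simp)
  then show "(th \<cdot>\<^sub>v fst p + (1 - th) \<cdot>\<^sub>v fst q, th \<cdot>\<^sub>m snd p + (1 - th) \<cdot>\<^sub>m snd q)
      \<in> D2set A B mu0 muf n m T"
    using Dset_convex_comb[OF D] muf unfolding pq D2set_def by simp
qed

context disturbed_linear_system
begin

lemma trace_cov_traj_final:
  "valid_params n m T Ubar K \<Longrightarrow>
   mat_trace (cov_mat M n (traj A B m Ubar K x0 w T)) = calJ1 A B (cov_mat M n x0) W n m T (stack_K K n m T)"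
  unfolding calJ1_def by (simp add: moments_traj_final(2))

lemma energy_constraint_iff:
  "valid_params n m T Ubar K \<Longrightarrow>
   (\<integral>\<omega>. (\<Sum>t<T. scalar_prod (ctrl m Ubar K w t \<omega>) (ctrl m Ubar K w t \<omega>)) \<partial>M) \<le> rho^2
     \<longleftrightarrow> (stack_u Ubar m T, stack_K K n m T) \<in> D1set W rho n m T"
  using stack_in_Dset unfolding D1set_def by (simp add: expected_control_energy)

lemma mean_constraint_iff:
  assumes v: "valid_params n m T Ubar K" and muf: "muf \<in> carrier_vec n"
  shows "mean_vec M n (traj A B m Ubar K x0 w T) = muf
     \<longleftrightarrow> (stack_u Ubar m T, stack_K K n m T) \<in> D2set A B (mean_vec M n x0) muf n m T"
proof -
  have "mean_vec M n x0 \<in> carrier_vec n" by (simp add: mean_vec_def)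
  then have "Pmat n T *\<^sub>v (Gu A B n m T *\<^sub>v stack_u Ubar m T + G0 A n T *\<^sub>v mean_vec M n x0) \<in> carrier_vec n"
    by (meson add_carrier_vec mult_mat_vec_carrier stacked_carrier)
  then show ?thesis
    using stack_in_Dset diff_eq_zero_vec_iff[OF _ muf]
    unfolding D2set_def moments_traj_final(1)[OF v] by simp
qed

end

theorem theorem1:
  fixes M :: "'a measure"
    and n m T :: nat
    and A B :: "nat \<Rightarrow> real mat"
    and Sigma0 W :: "real mat"
    and mu0 muf :: "real vec"
    and rho :: real
    and x0 :: "'a \<Rightarrow> real vec"
    and w :: "nat \<Rightarrow> 'a \<Rightarrow> real vec"
  assumes M: "prob_space M"
    and T: "0 < T"
    and rho: "0 < rho"
    and AB: "\<And>t. t < T \<Longrightarrow> A t \<in> carrier_mat n n \<and> B t \<in> carrier_mat n m"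
    and mu: "mu0 \<in> carrier_vec n" "muf \<in> carrier_vec n"
    and Sigma0: "sym_posdef n Sigma0"
    and W: "sym_psd n W"
    and x0_dim: "\<And>\<omega>. \<omega> \<in> space M \<Longrightarrow> x0 \<omega> \<in> carrier_vec n"
    and w_dim: "\<And>t \<omega>. t < T \<Longrightarrow> \<omega> \<in> space M \<Longrightarrow> w t \<omega> \<in> carrier_vec n"
    and x0_meas: "\<And>i. i < n \<Longrightarrow> (\<lambda>\<omega>. vec_index (x0 \<omega>) i) \<in> borel_measurable M"
    and w_meas: "\<And>t i. t < T \<Longrightarrow> i < n \<Longrightarrow> (\<lambda>\<omega>. vec_index (w t \<omega>) i) \<in> borel_measurable M"
    and x0_L2: "\<And>i. i < n \<Longrightarrow> integrable M (\<lambda>\<omega>. (vec_index (x0 \<omega>) i)^2)"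
    and w_L2: "\<And>t i. t < T \<Longrightarrow> i < n \<Longrightarrow> integrable M (\<lambda>\<omega>. (vec_index (w t \<omega>) i)^2)"
    and x0_mean: "mean_vec M n x0 = mu0"
    and x0_cov: "cov_mat M n x0 = Sigma0"
    and w_mean: "\<And>t. t < T \<Longrightarrow> mean_vec M n (w t) = 0\<^sub>v n"
    and w_cov: "\<And>t s. t < T \<Longrightarrow> s < T \<Longrightarrow>
                   cross_mat M n (w t) (w s) = (if t = s then W else 0\<^sub>m n n)"
    and x0_w: "\<And>t. t < T \<Longrightarrow> cross_mat M n x0 (w t) = 0\<^sub>m n n"
  shows
    "(\<forall>Ubar K. valid_params n m T Ubar K \<longrightarrow>
        (stack_u Ubar m T, stack_K K n m T) \<in> Dset n m T \<and>
        mat_trace (cov_mat M n (traj A B m Ubar K x0 w T))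
          = calJ1 A B Sigma0 W n m T (stack_K K n m T) \<and>
        (((\<integral>\<omega>. (\<Sum>t<T. scalar_prod (ctrl m Ubar K w t \<omega>) (ctrl m Ubar K w t \<omega>)) \<partial>M) - rho^2 \<le> 0
            \<and> mean_vec M n (traj A B m Ubar K x0 w T) = muf)
          \<longleftrightarrow> (stack_u Ubar m T, stack_K K n m T)
                \<in> D1set W rho n m T \<inter> D2set A B mu0 muf n m T) \<and>
        ((\<integral>\<omega>. (\<Sum>t<T. scalar_prod (ctrl m Ubar K w t \<omega>) (ctrl m Ubar K w t \<omega>)) \<partial>M) - rho^2 \<le> 0
          \<longleftrightarrow> (stack_u Ubar m T, stack_K K n m T) \<in> D1set W rho n m T) \<and>
        (mean_vec M n (traj A B m Ubar K x0 w T) = muf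
          \<longleftrightarrow> (stack_u Ubar m T, stack_K K n m T) \<in> D2set A B mu0 muf n m T))
     \<and> (\<forall>p \<in> Dset n m T. \<exists>Ubar K. valid_params n m T Ubar K \<and>
          p = (stack_u Ubar m T, stack_K K n m T))
     \<and> convex_obj (Dset n m T) (calJ1 A B Sigma0 W n m T)
     \<and> convex_pairs (D1set W rho n m T \<inter> D2set A B mu0 muf n m T)"
proof -
  interpret disturbed_linear_system M n m T A B W x0 w
    by (intro disturbed_linear_system.intro disturbed_linear_system_axioms.intro)
      (fact M AB x0_dim w_dim x0_meas w_meas x0_L2 w_L2 w_mean w_cov x0_w)+
  have S0: "Sigma0 \<in> carrier_mat n n" using Sigma0 unfolding sym_posdef_def by auto
  show ?thesis
    using Dset_is_stack convex_obj_calJ1[OF W S0]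
      convex_pairs_Int[OF convex_pairs_D1set[OF W] convex_pairs_D2set[OF mu]]
    by (simp add: stack_in_Dset trace_cov_traj_final energy_constraint_iff mean_constraint_iff[OF _ mu(2)]
        flip: x0_mean x0_cov)
qed

end
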